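(* Consider a degree-corrected stochastic block model with $K$ communities, membership matrix $\Theta\in\mathbb M_{n,K}$ (community sizes $n_k\ge1$), symmetric $B\in[0,1]^{K\times K}$ with $\mathrm{rank}(B)=K'\le K$, and propensities $\vartheta\in\mathbb R^n_+$ with $\max_{i\in G_k}\vartheta_i=1$. Let $P=\mathrm{diag}(\vartheta)\Theta B\Theta^\intercal\mathrm{diag}(\vartheta)=U\Sigma U^\intercal$ ($U\in\mathbb R^{n\times K'}$), $\gamma_n$ the smallest nonzero eigenvalue of $P$, $\phi_k$ the vector agreeing with $\vartheta$ on $G_k$ and zero elsewhere, $\Omega=\mathrm{diag}(\|\phi_1\|_2,\dots,\|\phi_K\|_2)$, $\bar B=\Omega B\Omega=HDH^\intercal$ ($H\in\mathbb R^{K\times K'}$), and $\tilde\vartheta\in\mathbb R^n$ with $\tilde\vartheta_i=\vartheta_i/\|\phi_{g_i}\|_2$. Let $\tilde A$ be either $\tilde A^{\rm rp}$ or $\tilde A^{\rm rs}$, computed from the adjacency matrix $A$ drawn from this model, and let $\tilde\Theta$ be the output of randomized spherical spectral clustering applied to $\tilde A$. Then: (a) If $K'=K$ and there is an absolute constant $c_9>0$ with $\frac{1}{\min_i\tilde\vartheta_i^2}\cdot\frac{K'\|\tilde A-P\|_2^2}{\gamma_n^2\min_kn_k}\le c_9$, then there exist subsets $S_k\subseteq G_k$ with $$L_1(\tilde\Theta,\Theta)\le\sum_{k=1}^K\frac{|S_k|}{n_k}\le c_9^{-1}\frac{1}{\min_i\tilde\vartheta_i^2}\cdot\frac{K'\|\tilde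 A-P\|_2^2}{\gamma_n^2\min_kn_k},$$ and for $G=\bigcup_k(G_k\setminus S_k)$ there is a $K\times K$ permutation matrix $J$ with $\tilde\Theta_{G\ast}J=\Theta_{G\ast}$. (b) If $K'<K$, there is a deterministic sequence $\xi'_n<1$ with $\max_{k\ne l}\cos(H_{k\ast},H_{l\ast})\le\xi'_n$, $\max_i\Sigma_{ii}<\overline\iota_n$, $\min_kB_{kk}>0$, and there is an absolute constant $c_{10}>0$ with $\frac{\overline\iota_n}{\min_i\tilde\vartheta_i^2\min_k\bar B_{kk}}\cdot\frac{K'\|\tilde A-P\|_2^2}{(1-\xi'_n)\gamma_n^2\min_kn_k}\le c_{10}$, then there exist subsets $S_k\subseteq G_k$ with $$L_1(\tilde\Theta,\Theta)\le\sum_{k=1}^K\frac{|S_k|}{n_k}\le c_{10}^{-1}\frac{\overline\iota_n}{\min_i\tilde\vartheta_i^2\min_k\bar B_{kk}}\cdot\frac{K'\|\tilde A-P\|_2^2}{(1-\xi'_n)\gamma_n^2\min_kn_k},$$ and for $G=\bigcup_k(G_k\setminus S_k)$ there is a $K\times K$ permutation matrix $I$ with $\tilde\Theta_{G\ast}I=\Theta_{G\ast}$.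
   Context: $\mathbb M_{n,K}$: $n\times K$ 0/1 matrices with exactly one $1$ per row; $g_i$ is the community of node $i$, $G_k=\{i:g_i=k\}$, $n_k=|G_k|$. DC-SBM: $a_{ij}\sim\mathrm{Bernoulli}(P_{ij})$ independently for $i<j$, $a_{ii}=0$, symmetric. Random-projection approximation $\tilde A^{\rm rp}$ (target rank $K'$, oversampling $r$, power $q$): draw $\Omega\in\mathbb R^{n\times(K'+r)}$ random, $Y=A^{2q+1}\Omega$, $Y=QR$ (QR), $\tilde A^{\rm rp}=QQ^\intercal AQQ^\intercal$. Random-sampling approximation $\tilde A^{\rm rs}$: for each $i<j$ independently select $(i,j)$ with probability $p_{ij}$, set $\tilde A^{\rm s}_{ij}=\tilde A^{\rm s}_{ji}=A_{ij}/p_{ij}$ if selected and $0$ otherwise, and let $\tilde A^{\rm rs}$ be a best rank-$K'$ approximation of $\tilde A^{\rm s}$ in spectral norm. Randomized spherical spectral clustering: let $\hat U\in\mathbb R^{n\times K'}$ be the eigenvectors of $\tilde A$ for its $K'$ largest eigenvalues; form $\hat U'$ by dividing each nonzero row of $\hat U$ by its Euclidean norm (zero rows left unchanged); let $(\tilde\Theta,\tilde X)$ minimize $\|\Theta'X-\hat U'\|_F^2$ over $\Theta'\in\mathbb M_{n,K}$, $X\in\mathbb R^{K\times K'}$ (exact $k$-means). $L_1(\tilde\Theta,\Theta)=\min_{J\in E_K}\sum_k(2n_k)^{-1}\|(\tilde\Theta J)_{G_k\ast}-\Theta_{G_k\ast}\|_0$, $E_K$ the $K\times K$ permutation matrices.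 $\cos(a,b)=a^\intercal b/(\|a\|_2\|b\|_2)$. *)

theory Defs
  imports "Jordan_Normal_Form.DL_Rank" "HOL-Combinatorics.Permutations"
begin

text \<open>Conventions: indices are 0-based; nodes are 0..<n, communities 0..<K.
Matrices are Jordan_Normal_Form matrices of type real mat with explicit carriers.\<close>

definition vnorm :: "real vec \<Rightarrow> real" where
  "vnorm x = sqrt (x \<bullet> x)"

definition spec_norm :: "real mat \<Rightarrow> real" where
  "spec_norm M = Sup {vnorm (M *\<^sub>v x) | x. x \<in> carrier_vec (dim_col M) \<and> vnorm x \<le> 1}"

definition frob_sq :: "real mat \<Rightarrow> real" where
  "frob_sq M = (\<Sum>i<dim_row M. \<Sum>j<dim_col M. (M $$ (i,j))\<^sup>2)"

definition mrank :: "real mat \<Rightarrow> nat" where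
  "mrank M = vec_space.rank (dim_row M) M"

definition diagv :: "real vec \<Rightarrow> real mat" where
  "diagv v = mat (dim_vec v) (dim_vec v) (\<lambda>(i,j). if i = j then v $ i else 0)"

definition symmetric_mat :: "real mat \<Rightarrow> bool" where
  "symmetric_mat M \<longleftrightarrow> M\<^sup>T = M"

definition memb_mat :: "nat \<Rightarrow> nat \<Rightarrow> real mat \<Rightarrow> bool" where
  "memb_mat n K T \<longleftrightarrow> T \<in> carrier_mat n K \<and>
     (\<forall>i<n. \<forall>k<K. T $$ (i,k) = 0 \<or> T $$ (i,k) = 1) \<and>
     (\<forall>i<n. card {k. k < K \<and> T $$ (i,k) = 1} = 1)"

definition comm :: "nat \<Rightarrow> real mat \<Rightarrow> nat \<Rightarrow> nat" where
  "comm K T i = (THE k. k < K \<and> T $$ (i,k) = 1)"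

definition Gset :: "real mat \<Rightarrow> nat \<Rightarrow> nat set" where
  "Gset T k = {i. i < dim_row T \<and> T $$ (i,k) = 1}"

definition perm_mat_of :: "nat \<Rightarrow> (nat \<Rightarrow> nat) \<Rightarrow> real mat" where
  "perm_mat_of K \<sigma> = mat K K (\<lambda>(i,j). if \<sigma> i = j then 1 else 0)"

definition perm_mats :: "nat \<Rightarrow> real mat set" where
  "perm_mats K = perm_mat_of K ` {\<sigma>. \<sigma> permutes {..<K}}"

definition l0_rows :: "real mat \<Rightarrow> nat set \<Rightarrow> nat" where
  "l0_rows M S = card {(i,j). i \<in> S \<and> i < dim_row M \<and> j < dim_col M \<and> M $$ (i,j) \<noteq> 0}"

definition L1_loss :: "nat \<Rightarrow> real mat \<Rightarrow> real mat \<Rightarrow> real" where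
  "L1_loss K Tt T = Min ((\<lambda>J. \<Sum>k<K. real (l0_rows (Tt * J - T) (Gset T k))
                                         / (2 * real (card (Gset T k)))) ` perm_mats K)"

definition cosv :: "real vec \<Rightarrow> real vec \<Rightarrow> real" where
  "cosv a b = (a \<bullet> b) / (vnorm a * vnorm b)"

definition phi :: "real mat \<Rightarrow> real vec \<Rightarrow> nat \<Rightarrow> real vec" where
  "phi T th k = vec (dim_vec th) (\<lambda>i. if i \<in> Gset T k then th $ i else 0)"

definition Omega_mat :: "nat \<Rightarrow> real mat \<Rightarrow> real vec \<Rightarrow> real mat" where
  "Omega_mat K T th = diagv (vec K (\<lambda>k. vnorm (phi T th k)))"

definition theta_tilde :: "nat \<Rightarrow> real mat \<Rightarrow> real vec \<Rightarrow> real vec" where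
  "theta_tilde K T th = vec (dim_vec th) (\<lambda>i. th $ i / vnorm (phi T th (comm K T i)))"

definition Pmat :: "real mat \<Rightarrow> real mat \<Rightarrow> real vec \<Rightarrow> real mat" where
  "Pmat T B th = diagv th * T * B * T\<^sup>T * diagv th"

definition dcsbm :: "nat \<Rightarrow> nat \<Rightarrow> nat \<Rightarrow> real mat \<Rightarrow> real mat \<Rightarrow> real vec \<Rightarrow> bool" where
  "dcsbm n K K' T B th \<longleftrightarrow>
     1 \<le> K \<and> memb_mat n K T \<and> (\<forall>k<K. 1 \<le> card (Gset T k)) \<and>
     B \<in> carrier_mat K K \<and> symmetric_mat B \<and> (\<forall>k<K. \<forall>l<K. 0 \<le> B $$ (k,l) \<and> B $$ (k,l) \<le> 1) \<and>
     mrank B = K' \<and> K' \<le> K \<and>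
     th \<in> carrier_vec n \<and> (\<forall>i<n. 0 < th $ i) \<and>
     (\<forall>k<K. Max ((\<lambda>i. th $ i) ` Gset T k) = 1)"

definition eig_decomp :: "nat \<Rightarrow> nat \<Rightarrow> real mat \<Rightarrow> real mat \<Rightarrow> real mat \<Rightarrow> bool" where
  "eig_decomp m r M V S \<longleftrightarrow> V \<in> carrier_mat m r \<and> S \<in> carrier_mat r r \<and>
     V\<^sup>T * V = 1\<^sub>m r \<and> diagonal_mat S \<and> (\<forall>i<r. S $$ (i,i) \<noteq> 0) \<and> M = V * S * V\<^sup>T"

text \<open>Possible realisations of the adjacency matrix A of the model with probability matrix P.\<close>
definition adj_realization :: "nat \<Rightarrow> real mat \<Rightarrow> real mat \<Rightarrow> bool" where
  "adj_realization n P A \<longleftrightarrow> A \<in> carrier_mat n n \<and> symmetric_mat A \<and>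
     (\<forall>i<n. A $$ (i,i) = 0) \<and>
     (\<forall>i<n. \<forall>j<n. i \<noteq> j \<longrightarrow> (A $$ (i,j) = 0 \<or> A $$ (i,j) = 1)) \<and>
     (\<forall>i<n. \<forall>j<n. i \<noteq> j \<longrightarrow> P $$ (i,j) = 0 \<longrightarrow> A $$ (i,j) = 0) \<and>
     (\<forall>i<n. \<forall>j<n. i \<noteq> j \<longrightarrow> P $$ (i,j) = 1 \<longrightarrow> A $$ (i,j) = 1)"

text \<open>Random-projection approximation (any test matrix Omega, any thin QR factorisation).\<close>
definition rp_approx :: "nat \<Rightarrow> nat \<Rightarrow> nat \<Rightarrow> nat \<Rightarrow> real mat \<Rightarrow> real mat \<Rightarrow> bool" where
  "rp_approx n K' r q A At \<longleftrightarrow> (\<exists>Om Q R.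
     Om \<in> carrier_mat n (K' + r) \<and> Q \<in> carrier_mat n (K' + r) \<and> R \<in> carrier_mat (K' + r) (K' + r) \<and>
     upper_triangular R \<and> Q\<^sup>T * Q = 1\<^sub>m (K' + r) \<and>
     A ^\<^sub>m (2 * q + 1) * Om = Q * R \<and>
     At = Q * Q\<^sup>T * A * Q * Q\<^sup>T)"

text \<open>Random-sampling approximation, for sampling probabilities p (0 < p_ij <= 1)
and any realisation sel of the independent edge selections (pairs with p_ij = 1 are always selected).\<close>
definition rs_approx :: "nat \<Rightarrow> nat \<Rightarrow> (nat \<Rightarrow> nat \<Rightarrow> real) \<Rightarrow> real mat \<Rightarrow> real mat \<Rightarrow> bool" where
  "rs_approx n K' p A At \<longleftrightarrow> (\<exists>sel :: nat \<Rightarrow> nat \<Rightarrow> bool.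
     (\<forall>i<n. \<forall>j<n. sel i j = sel j i) \<and>
     (\<forall>i<n. \<forall>j<n. i \<noteq> j \<longrightarrow> p i j = 1 \<longrightarrow> sel i j) \<and>
     (let As = mat n n (\<lambda>(i,j). if i \<noteq> j \<and> sel i j then A $$ (i,j) / p i j else 0) in
       At \<in> carrier_mat n n \<and> symmetric_mat At \<and> mrank At \<le> K' \<and>
       (\<forall>M \<in> carrier_mat n n. mrank M \<le> K' \<longrightarrow> spec_norm (As - At) \<le> spec_norm (As - M))))"

definition top_eigvecs :: "nat \<Rightarrow> nat \<Rightarrow> real mat \<Rightarrow> real mat \<Rightarrow> bool" where
  "top_eigvecs n K' At Uh \<longleftrightarrow> (\<exists>V lam.
     V \<in> carrier_mat n n \<and> V\<^sup>T * V = 1\<^sub>m n \<and>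
     At = V * diagv (vec n lam) * V\<^sup>T \<and>
     (\<forall>i j. i \<le> j \<longrightarrow> j < n \<longrightarrow> \<bar>lam j\<bar> \<le> \<bar>lam i\<bar>) \<and>
     Uh = mat n K' (\<lambda>(i,j). V $$ (i,j)))"

definition row_normalize :: "real mat \<Rightarrow> real mat" where
  "row_normalize M = mat (dim_row M) (dim_col M)
     (\<lambda>(i,j). if vnorm (row M i) = 0 then M $$ (i,j) else M $$ (i,j) / vnorm (row M i))"

text \<open>Exact k-means on the rows of Y: (T, X) minimises ||T X - Y||_F^2.\<close>
definition kmeans_sol :: "nat \<Rightarrow> nat \<Rightarrow> nat \<Rightarrow> real mat \<Rightarrow> real mat \<Rightarrow> real mat \<Rightarrow> bool" where
  "kmeans_sol n K K' Y T X \<longleftrightarrow> memb_mat n K T \<and> X \<in> carrier_mat K K' \<and>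
     (\<forall>T' X'. memb_mat n K T' \<longrightarrow> X' \<in> carrier_mat K K' \<longrightarrow>
        frob_sq (T * X - Y) \<le> frob_sq (T' * X' - Y))"

definition rssc_output :: "nat \<Rightarrow> nat \<Rightarrow> nat \<Rightarrow> real mat \<Rightarrow> real mat \<Rightarrow> bool" where
  "rssc_output n K K' At Tt \<longleftrightarrow> (\<exists>Uh X. top_eigvecs n K' At Uh \<and>
     kmeans_sol n K K' (row_normalize Uh) Tt X)"

text \<open>gamma_n: smallest (in absolute value) nonzero eigenvalue of P, read off a thin eigen-decomposition.\<close>
definition gamma_n :: "nat \<Rightarrow> real mat \<Rightarrow> real" where
  "gamma_n K' Sig = Min ((\<lambda>i. \<bar>Sig $$ (i,i)\<bar>) ` {..<K'})"

definition min_tt_sq :: "nat \<Rightarrow> nat \<Rightarrow> real mat \<Rightarrow> real vec \<Rightarrow> real" where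
  "min_tt_sq n K T th = Min ((\<lambda>i. (theta_tilde K T th $ i)\<^sup>2) ` {..<n})"

definition min_nk :: "nat \<Rightarrow> real mat \<Rightarrow> real" where
  "min_nk K T = real (Min ((\<lambda>k. card (Gset T k)) ` {..<K}))"

definition Bbar :: "nat \<Rightarrow> real mat \<Rightarrow> real mat \<Rightarrow> real vec \<Rightarrow> real mat" where
  "Bbar K T B th = Omega_mat K T th * B * Omega_mat K T th"

definition recovery :: "nat \<Rightarrow> real mat \<Rightarrow> real mat \<Rightarrow> real \<Rightarrow> bool" where
  "recovery K T Tt bound \<longleftrightarrow> (\<exists>S :: nat \<Rightarrow> nat set. (\<forall>k<K. S k \<subseteq> Gset T k) \<and>
     L1_loss K Tt T \<le> (\<Sum>k<K. real (card (S k)) / real (card (Gset T k))) \<and>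
     (\<Sum>k<K. real (card (S k)) / real (card (Gset T k))) \<le> bound \<and>
     (\<exists>J \<in> perm_mats K. \<forall>i \<in> (\<Union>k<K. Gset T k - S k). row (Tt * J) i = row T i))"

definition randomized_approx :: "nat \<Rightarrow> nat \<Rightarrow> real mat \<Rightarrow> real mat \<Rightarrow> bool" where
  "randomized_approx n K' A At \<longleftrightarrow> (\<exists>r q. rp_approx n K' r q A At) \<or>
      (\<exists>p. (\<forall>i<n. \<forall>j<n. 0 < p i j \<and> p i j \<le> 1) \<and> rs_approx n K' p A At)"

end

(* Let C = Theta^T diag(theta~) U. The block structure of P forces U = diag(theta~) Theta C, so
   after row normalisation every node of community k sits at the normalised k-th row of C. When
   K' = K these points are orthonormal; when K' < K they satisfy C C^T = H H^T, so their angles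
   are those between the rows of H.
   A Weyl-type bound on the trailing eigenvalues of A~ and the Davis-Kahan sin Theta theorem
   bound the distance between the top-K' eigenvectors of A~ and the span of U by
   O(sqrt K' ||A~ - P|| / gamma_n); row normalisation inflates this by at most the inverse of
   the smallest row norm of U. An exact k-means solution costs no more than the true centres, so
   few nodes can be far from their true centre, and all other nodes are clustered consistently
   because the centres are well separated. For c9 = c10 = 1/1000 the far nodes are fewer than
   the nodes of any community, so the labelling agrees with the truth up to a permutation. *)

theory Submission
  imports Defs "HOL-Analysis.L2_Norm"
begin

section \<open>Finite sums\<close>

lemma delta_mult: "(if a = b then 1 else 0) * (x::real) = (if a = b then x else 0)"
  by simp

lemma sum_lessThan_split:
  "m \<le> (n::nat) \<Longrightarrow> (\<Sum>j<n. f j) = (\<Sum>j<m. f j) + (\<Sum>j\<in>{m..<n}. (f j::real))"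
  using sum.atLeastLessThan_concat[of 0 m n f] by (simp add: lessThan_atLeast0)

lemma sum_product_power2_le:
  fixes f g :: "'a \<Rightarrow> real"
  shows "(\<Sum>i\<in>A. f i * g i)\<^sup>2 \<le> (\<Sum>i\<in>A. (f i)\<^sup>2) * (\<Sum>i\<in>A. (g i)\<^sup>2)"
proof -
  have "\<bar>\<Sum>i\<in>A. f i * g i\<bar> \<le> (\<Sum>i\<in>A. \<bar>f i\<bar> * \<bar>g i\<bar>)"
    using sum_abs[of "\<lambda>i. f i * g i" A] by (simp add: abs_mult)
  also have "\<dots> \<le> L2_set f A * L2_set g A" by (rule L2_set_mult_ineq)
  finally have "\<bar>\<Sum>i\<in>A. f i * g i\<bar> \<le> \<bar>L2_set f A * L2_set g A\<bar>" by simp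
  then have "(\<Sum>i\<in>A. f i * g i)\<^sup>2 \<le> (L2_set f A * L2_set g A)\<^sup>2"
    by (simp only: abs_le_square_iff)
  then show ?thesis unfolding L2_set_def power_mult_distrib by (simp add: sum_nonneg)
qed

lemma sum_square_orthonormal_combination:
  fixes V :: "nat \<Rightarrow> nat \<Rightarrow> real"
  assumes orth: "\<And>i i'. i < n \<Longrightarrow> i' < n \<Longrightarrow> (\<Sum>j<m. V i j * V i' j) = (if i = i' then 1 else 0)"
  shows "(\<Sum>j<m. (\<Sum>i<n. V i j * y i)\<^sup>2) = (\<Sum>i<n. (y i)\<^sup>2)"
proof -
  have "(\<Sum>j<m. (\<Sum>i<n. V i j * y i)\<^sup>2) = (\<Sum>j<m. \<Sum>i<n. \<Sum>i'<n. y i * y i' * (V i j * V i' j))"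
    by (simp add: power2_eq_square sum_product mult_ac)
  also have "\<dots> = (\<Sum>i<n. \<Sum>i'<n. y i * y i' * (\<Sum>j<m. V i j * V i' j))"
    by (simp add: sum_distrib_left sum.swap[of _ "{..<m}"])
  also have "\<dots> = (\<Sum>i<n. \<Sum>i'<n. y i * y i' * (if i = i' then 1 else 0))"
    by (intro sum.cong refl) (simp add: orth)
  also have "\<dots> = (\<Sum>i<n. (y i)\<^sup>2)"
    by (simp add: power2_eq_square if_distrib sum.delta cong: if_cong)
  finally show ?thesis .
qed

lemma neg_norms_le_sum_product:
  fixes a b :: "nat \<Rightarrow> real"
  shows "- (sqrt (\<Sum>k<r. (a k)\<^sup>2) * sqrt (\<Sum>k<r. (b k)\<^sup>2)) \<le> (\<Sum>k<r. a k * b k)"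
proof -
  have "(\<Sum>k<r. a k * b k)\<^sup>2 \<le> (\<Sum>k<r. (a k)\<^sup>2) * (\<Sum>k<r. (b k)\<^sup>2)" by (rule sum_product_power2_le)
  also have "\<dots> = (sqrt (\<Sum>k<r. (a k)\<^sup>2) * sqrt (\<Sum>k<r. (b k)\<^sup>2))\<^sup>2"
    by (simp add: power_mult_distrib sum_nonneg)
  finally have "\<bar>\<Sum>k<r. a k * b k\<bar> \<le> \<bar>sqrt (\<Sum>k<r. (a k)\<^sup>2) * sqrt (\<Sum>k<r. (b k)\<^sup>2)\<bar>"
    by (simp only: abs_le_square_iff)
  moreover have "0 \<le> sqrt (\<Sum>k<r. (a k)\<^sup>2) * sqrt (\<Sum>k<r. (b k)\<^sup>2)" by (simp add: sum_nonneg)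
  ultimately show ?thesis by (simp add: abs_le_iff)
qed

lemma sum_normalized_diff_power2:
  fixes a b :: "nat \<Rightarrow> real" and x y :: real
  assumes x: "0 < x" and y: "0 < y"
  and a: "(\<Sum>k<r. (a k)\<^sup>2) = x\<^sup>2" and b: "(\<Sum>k<r. (b k)\<^sup>2) = y\<^sup>2"
  shows "(\<Sum>k<r. (a k / x - b k / y)\<^sup>2) = 2 - 2 * ((\<Sum>k<r. a k * b k) / (x * y))"
proof -
  have "(\<Sum>k<r. (a k / x - b k / y)\<^sup>2) = (\<Sum>k<r. (a k)\<^sup>2 / x\<^sup>2 + (b k)\<^sup>2 / y\<^sup>2 - 2 * (a k * b k) / (x * y))"
    by (intro sum.cong refl) (simp add: power2_diff power_divide)
  also have "\<dots> = (\<Sum>k<r. (a k)\<^sup>2) / x\<^sup>2 + (\<Sum>k<r. (b k)\<^sup>2) / y\<^sup>2 - 2 * (\<Sum>k<r. a k * b k) / (x * y)"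
    by (simp add: sum.distrib sum_subtractf sum_divide_distrib sum_distrib_left)
  also have "\<dots> = 2 - 2 * ((\<Sum>k<r. a k * b k) / (x * y))" using x y a b by simp
  finally show ?thesis .
qed

lemma L2_set_power2: "(L2_set f A)\<^sup>2 = (\<Sum>i\<in>A. (f i)\<^sup>2)"
  unfolding L2_set_def by (simp add: sum_nonneg)

lemma L2_set_scale: "L2_set (\<lambda>j. r * f j) A = \<bar>r\<bar> * L2_set f A"
proof -
  have "L2_set (\<lambda>j. r * f j) A = L2_set (\<lambda>j. \<bar>r\<bar> * f j) A"
    unfolding L2_set_def by (simp add: power_mult_distrib)
  also have "\<dots> = \<bar>r\<bar> * L2_set f A" by (rule L2_set_right_distrib[symmetric]) simp
  finally show ?thesis .
qed

lemma L2_set_diff_commute: "L2_set (\<lambda>j. f j - g j) A = L2_set (\<lambda>j. g j - f j) A"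
  unfolding L2_set_def by (simp add: power2_commute)

lemma L2_set_diff_triangle:
  "L2_set (\<lambda>j. f j - h j) A \<le> L2_set (\<lambda>j. f j - g j) A + L2_set (\<lambda>j. g j - h j) A"
  using L2_set_triangle_ineq[of "\<lambda>j. f j - g j" "\<lambda>j. g j - h j" A] by simp

lemma L2_set_reverse_triangle: "\<bar>L2_set f A - L2_set g A\<bar> \<le> L2_set (\<lambda>j. f j - g j) A"
proof -
  have "L2_set f A \<le> L2_set (\<lambda>j. f j - g j) A + L2_set g A"
    using L2_set_triangle_ineq[of "\<lambda>j. f j - g j" g A] by simp
  moreover have "L2_set g A \<le> L2_set (\<lambda>j. g j - f j) A + L2_set f A"
    using L2_set_triangle_ineq[of "\<lambda>j. g j - f j" f A] by simp
  ultimately show ?thesis using L2_set_diff_commute[of g f A] by linarith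
qed

lemma L2_set_rescaled_diff_le:
  fixes a z :: "nat \<Rightarrow> real"
  assumes N: "N = L2_set a A" "0 < N" and rho: "0 < \<rho>"
  shows "L2_set (\<lambda>j. a j / N - z j) A \<le> \<bar>\<rho> - N\<bar> / \<rho> + L2_set (\<lambda>j. a j - \<rho> * z j) A / \<rho>"
proof -
  have split: "a j / N - z j = (1/N - 1/\<rho>) * a j + (1/\<rho>) * (a j - \<rho> * z j)" for j
    using rho N by (simp add: field_simps)
  have "L2_set (\<lambda>j. a j / N - z j) A
      \<le> L2_set (\<lambda>j. (1/N - 1/\<rho>) * a j) A + L2_set (\<lambda>j. (1/\<rho>) * (a j - \<rho> * z j)) A"
    unfolding split by (rule L2_set_triangle_ineq)
  also have "L2_set (\<lambda>j. (1/N - 1/\<rho>) * a j) A = \<bar>1/N - 1/\<rho>\<bar> * N"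
    using L2_set_scale N by simp
  also have "\<bar>1/N - 1/\<rho>\<bar> * N = \<bar>\<rho> - N\<bar> / \<rho>"
  proof -
    have "1/N - 1/\<rho> = (\<rho> - N) / (N * \<rho>)" using N rho by (simp add: field_simps)
    then have "\<bar>1/N - 1/\<rho>\<bar> = \<bar>\<rho> - N\<bar> / (N * \<rho>)" using N rho by simp
    then show ?thesis using N by simp
  qed
  also have "L2_set (\<lambda>j. (1/\<rho>) * (a j - \<rho> * z j)) A = L2_set (\<lambda>j. a j - \<rho> * z j) A / \<rho>"
    using L2_set_scale[of "1/\<rho>"] rho by simp
  finally show ?thesis .
qed

text \<open>The case split in \<open>na\<close> mirrors \<^const>\<open>row_normalize\<close>, which leaves zero rows unchanged.\<close>

lemma L2_set_normalized_diff_le: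
  fixes a z :: "nat \<Rightarrow> real" and A :: "nat set"
  assumes fin: "finite A" and rho: "0 < \<rho>" and zle: "L2_set z A \<le> 1"
  defines "na \<equiv> (\<lambda>j. if L2_set a A = 0 then a j else a j / L2_set a A)"
  shows "L2_set (\<lambda>j. na j - z j) A \<le> (2 * L2_set (\<lambda>j. a j - \<rho> * z j) A + \<rho> * (1 - L2_set z A)) / \<rho>"
proof (cases "L2_set a A = 0")
  case True
  then have a0: "\<forall>j\<in>A. a j = 0" using L2_set_eq_0_iff[OF fin] by blast
  have "L2_set (\<lambda>j. na j - z j) A = L2_set z A"
    unfolding L2_set_def na_def using True a0 by (intro arg_cong[where f=sqrt] sum.cong) auto
  moreover have "L2_set (\<lambda>j. a j - \<rho> * z j) A = L2_set (\<lambda>j. (-\<rho>) * z j) A"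
    using a0 by (intro L2_set_cong) auto
  then have "L2_set (\<lambda>j. a j - \<rho> * z j) A = \<rho> * L2_set z A"
    using L2_set_scale[of "-\<rho>" z A] rho by simp
  moreover have "L2_set z A \<le> (2 * (\<rho> * L2_set z A) + \<rho> * (1 - L2_set z A)) / \<rho>"
    using rho zle by (simp add: field_simps)
  ultimately show ?thesis by simp
next
  case False
  define N where "N = L2_set a A"
  define D where "D = L2_set (\<lambda>j. a j - \<rho> * z j) A"
  have N: "0 < N" using False N_def L2_set_nonneg[of a A] by linarith
  have "\<bar>L2_set a A - L2_set (\<lambda>j. \<rho> * z j) A\<bar> \<le> D"
    unfolding D_def by (rule L2_set_reverse_triangle)
  then have "\<bar>N - \<rho> * L2_set z A\<bar> \<le> D" using L2_set_scale[of \<rho> z A] rho N_def by simp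
  moreover have "\<rho> * L2_set z A \<le> \<rho>" using zle rho by (simp add: mult_left_le)
  moreover have "\<rho> * (1 - L2_set z A) = \<rho> - \<rho> * L2_set z A" by (simp add: algebra_simps)
  ultimately have "\<bar>\<rho> - N\<bar> \<le> D + \<rho> * (1 - L2_set z A)" by linarith
  then have "\<bar>\<rho> - N\<bar> / \<rho> \<le> (D + \<rho> * (1 - L2_set z A)) / \<rho>" using rho by (simp add: divide_right_mono)
  moreover have "L2_set (\<lambda>j. na j - z j) A \<le> \<bar>\<rho> - N\<bar> / \<rho> + D / \<rho>"
    using L2_set_rescaled_diff_le[OF N_def N rho, of z] False by (simp add: na_def N_def D_def)
  ultimately show ?thesis unfolding D_def[symmetric] using rho by (simp add: field_simps)
qed

lemma power2_le_of_normalized_bound: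
  fixes d t \<rho> L :: real
  assumes "0 \<le> d" "0 \<le> t" "t \<le> 1" "0 < \<rho>" "0 \<le> L" "L \<le> (2 * d + \<rho> * (1 - t)) / \<rho>"
  shows "L\<^sup>2 \<le> (8 * d\<^sup>2 + 2 * \<rho>\<^sup>2 * (1 - t\<^sup>2)) / \<rho>\<^sup>2"
proof -
  have "L\<^sup>2 \<le> ((2 * d + \<rho> * (1 - t)) / \<rho>)\<^sup>2" using assms by (intro power_mono) auto
  also have "\<dots> = (2 * d + \<rho> * (1 - t))\<^sup>2 / \<rho>\<^sup>2" by (simp add: power_divide)
  also have "(2 * d + \<rho> * (1 - t))\<^sup>2 \<le> 8 * d\<^sup>2 + 2 * \<rho>\<^sup>2 * (1 - t\<^sup>2)"
  proof -
    have "(2 * d + \<rho> * (1 - t))\<^sup>2 \<le> 2 * (2*d)\<^sup>2 + 2 * (\<rho> * (1 - t))\<^sup>2"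
      by (smt (verit) power2_sum zero_le_power2 power2_diff)
    moreover have "(1 - t)\<^sup>2 \<le> 1 - t\<^sup>2"
      using assms(2,3) by (simp add: power2_eq_square algebra_simps mult_left_le)
    then have "(\<rho> * (1 - t))\<^sup>2 \<le> \<rho>\<^sup>2 * (1 - t\<^sup>2)"
      by (simp add: power_mult_distrib mult_left_mono)
    ultimately show ?thesis by (simp add: power_mult_distrib)
  qed
  then have "(2 * d + \<rho> * (1 - t))\<^sup>2 / \<rho>\<^sup>2 \<le> (8 * d\<^sup>2 + 2 * \<rho>\<^sup>2 * (1 - t\<^sup>2)) / \<rho>\<^sup>2"
    by (simp add: divide_right_mono)
  finally show ?thesis .
qed

section \<open>Perturbation of eigenvectors\<close>

locale orthonormal_eigen =
  fixes n K' :: nat and U :: "nat \<Rightarrow> nat \<Rightarrow> real" and s :: "nat \<Rightarrow> real"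
    and P :: "nat \<Rightarrow> nat \<Rightarrow> real"
  assumes U_orthonormal:
    "\<And>k l. k<K' \<Longrightarrow> l<K' \<Longrightarrow> (\<Sum>i<n. U i k * U i l) = (if k=l then 1 else 0)"
  and P_eq: "\<And>i i'. i<n \<Longrightarrow> i'<n \<Longrightarrow> P i i' = (\<Sum>k<K'. U i k * s k * U i' k)"
begin

lemma P_mult_U: assumes "k<K'" "i<n" shows "(\<Sum>i'<n. P i i' * U i' k) = s k * U i k"
proof -
  have "(\<Sum>i'<n. P i i' * U i' k) = (\<Sum>i'<n. \<Sum>l<K'. U i' l * U i' k * (U i l * s l))"
    using assms by (intro sum.cong refl) (simp add: P_eq sum_distrib_left sum_distrib_right mult_ac)
  also have "\<dots> = (\<Sum>l<K'. (\<Sum>i'<n. U i' l * U i' k) * (U i l * s l))"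
    unfolding sum_distrib_right by (rule sum.swap)
  also have "\<dots> = U i k * s k" using assms by (simp add: U_orthonormal delta_mult)
  finally show ?thesis by (simp add: mult.commute)
qed

lemma U_combination_power2: "(\<Sum>i<n. (\<Sum>k<K'. U i k * y k)\<^sup>2) = (\<Sum>k<K'. (y k)\<^sup>2)"
  using sum_square_orthonormal_combination[where n=K' and m=n and V="\<lambda>i j. U j i" and y=y]
    U_orthonormal by simp

end

text \<open>Entrywise form of \<open>At = V diag(lam) V\<^sup>T\<close> and \<open>P = U diag(s) U\<^sup>T\<close> with \<open>\<parallel>At - P\<parallel> \<le> e\<close>;
  \<open>gam\<close> bounds the nonzero eigenvalues of \<open>P\<close> away from zero.\<close>

locale eigen_perturbation = orthonormal_eigen +
  fixes V :: "nat \<Rightarrow> nat \<Rightarrow> real" and lam :: "nat \<Rightarrow> real" and At :: "nat \<Rightarrow> nat \<Rightarrow> real"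
    and e gam :: real
  assumes K'_le_n: "K' \<le> n"
  and V_orthonormal_cols:
    "\<And>j j'. j<n \<Longrightarrow> j'<n \<Longrightarrow> (\<Sum>i<n. V i j * V i j') = (if j=j' then 1 else 0)"
  and V_orthonormal_rows:
    "\<And>i i'. i<n \<Longrightarrow> i'<n \<Longrightarrow> (\<Sum>j<n. V i j * V i' j) = (if i=i' then 1 else 0)"
  and lam_sorted: "\<And>i j. i \<le> j \<Longrightarrow> j < n \<Longrightarrow> \<bar>lam j\<bar> \<le> \<bar>lam i\<bar>"
  and At_eq: "\<And>i i'. i<n \<Longrightarrow> i'<n \<Longrightarrow> At i i' = (\<Sum>j<n. V i j * lam j * V i' j)"
  and s_gap: "\<And>k. k<K' \<Longrightarrow> gam \<le> \<bar>s k\<bar>"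
  and gam_pos: "0 < gam"
  and perturbation_le:
    "\<And>x. (\<Sum>i<n. (\<Sum>i'<n. (At i i' - P i i') * x i')\<^sup>2) \<le> e\<^sup>2 * (\<Sum>i<n. (x i)\<^sup>2)"
  and e_nonneg: "0 \<le> e"
begin

definition overlap :: "nat \<Rightarrow> nat \<Rightarrow> real" where
  "overlap j k = (\<Sum>i<n. V i j * U i k)"

text \<open>The squared Frobenius norm of \<open>sin \<Theta>\<close> between the span of \<open>U\<close> and the span of the
  top \<open>K'\<close> eigenvectors of \<open>At\<close>.\<close>

definition sin_theta_sq :: real where
  "sin_theta_sq = (\<Sum>k<K'. \<Sum>j\<in>{K'..<n}. (overlap j k)\<^sup>2)"

text \<open>Rows of the top \<open>K'\<close> eigenvectors, normalised as in \<^const>\<open>row_normalize\<close>.\<close>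

definition normalized_row :: "nat \<Rightarrow> nat \<Rightarrow> real" where
  "normalized_row i j =
    (if L2_set (\<lambda>j. V i j) {..<K'} = 0 then V i j else V i j / L2_set (\<lambda>j. V i j) {..<K'})"

definition residual :: "nat \<Rightarrow> nat \<Rightarrow> real" where
  "residual j i = V i j - (\<Sum>k<K'. U i k * overlap j k)"

lemma V_parseval: "(\<Sum>j<n. (\<Sum>i<n. V i j * y i)\<^sup>2) = (\<Sum>i<n. (y i)\<^sup>2)"
  using sum_square_orthonormal_combination[where n=n and m=n and V=V and y=y] V_orthonormal_rows
  by simp

lemma overlap_col_power2_sum: "k<K' \<Longrightarrow> (\<Sum>j<n. (overlap j k)\<^sup>2) = 1"
  unfolding overlap_def using V_parseval[of "\<lambda>i. U i k"] U_orthonormal[of k k]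
  by (simp add: power2_eq_square)

lemma V_col_power2_sum: "j<n \<Longrightarrow> (\<Sum>i<n. (V i j)\<^sup>2) = 1"
  using V_orthonormal_cols[of j j] by (simp add: power2_eq_square)

lemma V_mult_At: assumes "j<n" "i'<n" shows "(\<Sum>i<n. V i j * At i i') = lam j * V i' j"
proof -
  have "(\<Sum>i<n. V i j * At i i') = (\<Sum>i<n. \<Sum>l<n. V i j * V i l * (lam l * V i' l))"
    using assms by (intro sum.cong refl) (simp add: At_eq sum_distrib_left mult.assoc)
  also have "\<dots> = (\<Sum>l<n. (\<Sum>i<n. V i j * V i l) * (lam l * V i' l))"
    unfolding sum_distrib_right by (rule sum.swap)
  also have "\<dots> = lam j * V i' j" using assms by (simp add: V_orthonormal_cols delta_mult)
  finally show ?thesis .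
qed

lemma At_mult_V: assumes "j<n" "i<n" shows "(\<Sum>i'<n. At i i' * V i' j) = lam j * V i j"
proof -
  have "(\<Sum>i'<n. At i i' * V i' j) = (\<Sum>i'<n. \<Sum>l<n. V i' l * V i' j * (lam l * V i l))"
    using assms by (intro sum.cong refl) (simp add: At_eq sum_distrib_left sum_distrib_right mult_ac)
  also have "\<dots> = (\<Sum>l<n. (\<Sum>i'<n. V i' l * V i' j) * (lam l * V i l))"
    unfolding sum_distrib_right by (rule sum.swap)
  also have "\<dots> = lam j * V i j" using assms by (simp add: V_orthonormal_cols delta_mult)
  finally show ?thesis .
qed

lemma perturbation_overlap: assumes "j<n" "k<K'"
  shows "(\<Sum>i<n. V i j * (\<Sum>i'<n. (At i i' - P i i') * U i' k)) = (lam j - s k) * overlap j k"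
proof -
  have "(\<Sum>i<n. V i j * (\<Sum>i'<n. (At i i' - P i i') * U i' k))
     = (\<Sum>i<n. \<Sum>i'<n. V i j * At i i' * U i' k) - (\<Sum>i<n. V i j * (\<Sum>i'<n. P i i' * U i' k))"
    by (simp add: sum_distrib_left algebra_simps sum_subtractf)
  also have "(\<Sum>i<n. \<Sum>i'<n. V i j * At i i' * U i' k) = (\<Sum>i'<n. (\<Sum>i<n. V i j * At i i') * U i' k)"
    unfolding sum_distrib_right by (rule sum.swap)
  also have "\<dots> = (\<Sum>i'<n. lam j * V i' j * U i' k)"
    using assms by (intro sum.cong refl) (simp add: V_mult_At)
  also have "(\<Sum>i<n. V i j * (\<Sum>i'<n. P i i' * U i' k)) = (\<Sum>i<n. V i j * (s k * U i k))"
    using assms by (intro sum.cong refl) (simp add: P_mult_U)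
  finally show ?thesis
    by (simp add: overlap_def sum_distrib_left algebra_simps sum_subtractf)
qed

lemma overlap_sum_le: assumes "m \<le> n" shows "(\<Sum>j<m. \<Sum>k<K'. (overlap j k)\<^sup>2) \<le> real K'"
proof -
  have "(\<Sum>j<m. \<Sum>k<K'. (overlap j k)\<^sup>2) = (\<Sum>k<K'. \<Sum>j<m. (overlap j k)\<^sup>2)" by (rule sum.swap)
  also have "\<dots> \<le> (\<Sum>k<K'. \<Sum>j<n. (overlap j k)\<^sup>2)"
    using assms by (intro sum_mono sum_mono2) auto
  also have "\<dots> = (\<Sum>k<K'. 1)" by (intro sum.cong refl) (simp add: overlap_col_power2_sum)
  finally show ?thesis by simp
qed

lemma residual_orthogonal_U: "k<K' \<Longrightarrow> (\<Sum>i<n. U i k * residual j i) = 0"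
proof -
  assume k: "k<K'"
  have "(\<Sum>i<n. U i k * residual j i)
      = (\<Sum>i<n. V i j * U i k) - (\<Sum>i<n. \<Sum>k'<K'. U i k * U i k' * overlap j k')"
    by (simp add: residual_def algebra_simps sum_subtractf sum_distrib_left)
  also have "(\<Sum>i<n. \<Sum>k'<K'. U i k * U i k' * overlap j k')
      = (\<Sum>k'<K'. (\<Sum>i<n. U i k * U i k') * overlap j k')"
    unfolding sum_distrib_right by (rule sum.swap)
  also have "\<dots> = overlap j k" using k by (simp add: U_orthonormal delta_mult)
  finally show ?thesis by (simp add: overlap_def)
qed

lemma residual_inner_V: "j<n \<Longrightarrow> (\<Sum>i<n. residual j i * V i j) = 1 - (\<Sum>k<K'. (overlap j k)\<^sup>2)"
proof -
  assume j: "j<n"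
  have "(\<Sum>i<n. residual j i * V i j)
      = (\<Sum>i<n. (V i j)\<^sup>2) - (\<Sum>i<n. \<Sum>k<K'. V i j * U i k * overlap j k)"
    by (simp add: residual_def algebra_simps sum_subtractf sum_distrib_left sum_distrib_right
        power2_eq_square)
  also have "(\<Sum>i<n. \<Sum>k<K'. V i j * U i k * overlap j k) = (\<Sum>k<K'. (\<Sum>i<n. V i j * U i k) * overlap j k)"
    unfolding sum_distrib_right by (rule sum.swap)
  also have "\<dots> = (\<Sum>k<K'. (overlap j k)\<^sup>2)" by (simp add: overlap_def power2_eq_square)
  finally show ?thesis using V_col_power2_sum[OF j] by simp
qed

lemma residual_power2_sum: "j<n \<Longrightarrow> (\<Sum>i<n. (residual j i)\<^sup>2) = 1 - (\<Sum>k<K'. (overlap j k)\<^sup>2)"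
proof -
  assume j: "j<n"
  have "(\<Sum>i<n. (residual j i)\<^sup>2)
      = (\<Sum>i<n. residual j i * V i j) - (\<Sum>i<n. \<Sum>k<K'. overlap j k * (U i k * residual j i))"
    by (simp add: power2_eq_square residual_def[of j i for i] algebra_simps sum_subtractf
        sum_distrib_left)
  also have "(\<Sum>i<n. \<Sum>k<K'. overlap j k * (U i k * residual j i))
      = (\<Sum>k<K'. overlap j k * (\<Sum>i<n. U i k * residual j i))"
    unfolding sum_distrib_left by (rule sum.swap)
  also have "\<dots> = 0" by (simp add: residual_orthogonal_U)
  finally show ?thesis using residual_inner_V[OF j] by simp
qed

lemma residual_mult_P: "(\<Sum>i<n. residual j i * P i i') = 0" if "i'<n"
proof -
  have "(\<Sum>i<n. residual j i * P i i') = (\<Sum>i<n. \<Sum>k<K'. (U i k * residual j i) * (s k * U i' k))"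
    using that by (intro sum.cong refl) (simp add: P_eq sum_distrib_left mult_ac)
  also have "\<dots> = (\<Sum>k<K'. (\<Sum>i<n. U i k * residual j i) * (s k * U i' k))"
    unfolding sum_distrib_right by (rule sum.swap)
  finally show ?thesis by (simp add: residual_orthogonal_U)
qed

text \<open>The part of the eigenvector \<open>v\<^sub>j\<close> of \<open>At\<close> orthogonal to the span of \<open>U\<close> is annihilated by
  \<open>P\<close>, so on it \<open>At - P\<close> acts like \<open>lam j\<close>.\<close>

lemma eigenvalue_residual_le: assumes j: "j<n"
  shows "(lam j)\<^sup>2 * (1 - (\<Sum>k<K'. (overlap j k)\<^sup>2)) \<le> e\<^sup>2"
proof -
  define W where "W = 1 - (\<Sum>k<K'. (overlap j k)\<^sup>2)"
  have W: "W = (\<Sum>i<n. (residual j i)\<^sup>2)" unfolding W_def by (simp add: residual_power2_sum j)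
  define Ev where "Ev i = (\<Sum>i'<n. (At i i' - P i i') * V i' j)" for i
  have "(\<Sum>i<n. residual j i * (\<Sum>i'<n. P i i' * V i' j))
      = (\<Sum>i'<n. (\<Sum>i<n. residual j i * P i i') * V i' j)"
    unfolding sum_distrib_left sum_distrib_right by (subst sum.swap) (simp add: mult.assoc)
  then have "(\<Sum>i<n. residual j i * Ev i)
      = (\<Sum>i<n. residual j i * (\<Sum>i'<n. At i i' * V i' j))
        - (\<Sum>i'<n. (\<Sum>i<n. residual j i * P i i') * V i' j)"
    by (simp add: Ev_def algebra_simps sum_subtractf sum_distrib_left)
  also have "(\<Sum>i<n. residual j i * (\<Sum>i'<n. At i i' * V i' j)) = lam j * W"
    using j by (simp add: At_mult_V sum_distrib_left residual_inner_V[symmetric] W_def mult_ac)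
  also have "(\<Sum>i'<n. (\<Sum>i<n. residual j i * P i i') * V i' j) = 0"
    by (simp add: residual_mult_P)
  finally have inner: "(\<Sum>i<n. residual j i * Ev i) = lam j * W" by simp
  have "(lam j * W)\<^sup>2 \<le> W * (\<Sum>i<n. (Ev i)\<^sup>2)"
    using sum_product_power2_le[of "residual j" Ev "{..<n}"] inner W by simp
  also have "\<dots> \<le> W * e\<^sup>2"
    using perturbation_le[of "\<lambda>i. V i j"] V_col_power2_sum[OF j] W
    by (intro mult_left_mono) (simp_all add: Ev_def sum_nonneg)
  finally have "W * ((lam j)\<^sup>2 * W) \<le> W * e\<^sup>2" by (simp add: power2_eq_square mult_ac)
  moreover have "0 \<le> W" using W by (simp add: sum_nonneg)
  ultimately show ?thesis unfolding W_def[symmetric]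
    by (cases "W = 0") (simp_all add: mult_le_cancel_left)
qed

lemma exists_small_overlap_row: assumes "K' < n"
  obtains j where "j < K'+1" "(\<Sum>k<K'. (overlap j k)\<^sup>2) \<le> real K' / real (K'+1)"
proof (rule ccontr)
  assume "\<not> thesis"
  with that have big: "\<And>j. j < K'+1 \<Longrightarrow> real K' / real (K'+1) < (\<Sum>k<K'. (overlap j k)\<^sup>2)"
    by force
  have "real K' = (\<Sum>j<K'+1. real K' / real (K'+1))" by simp
  also have "\<dots> < (\<Sum>j<K'+1. \<Sum>k<K'. (overlap j k)\<^sup>2)" by (intro sum_strict_mono big) auto
  also have "\<dots> \<le> real K'" using assms by (intro overlap_sum_le) simp
  finally show False by simp
qed

text \<open>Weyl-type bound: one of the first \<open>K' + 1\<close> eigenvectors of \<open>At\<close> is nearly orthogonal to the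
  span of \<open>U\<close> (\<open>exists_small_overlap_row\<close>), and \<open>eigenvalue_residual_le\<close> bounds its eigenvalue.\<close>

lemma tail_eigenvalue_le: assumes "K' \<le> j" "j < n" shows "(lam j)\<^sup>2 \<le> real (K'+1) * e\<^sup>2"
proof -
  have "K' < n" using assms by simp
  then obtain j0 where j0: "j0 < K'+1" "(\<Sum>k<K'. (overlap j0 k)\<^sup>2) \<le> real K' / real (K'+1)"
    by (rule exists_small_overlap_row)
  have "(lam j0)\<^sup>2 * (1 / real (K'+1)) \<le> (lam j0)\<^sup>2 * (1 - (\<Sum>k<K'. (overlap j0 k)\<^sup>2))"
    using j0(2) by (intro mult_left_mono) (simp_all add: field_simps)
  also have "\<dots> \<le> e\<^sup>2" using j0 assms by (intro eigenvalue_residual_le) simp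
  finally have "(lam j0)\<^sup>2 \<le> real (K'+1) * e\<^sup>2" by (simp add: field_simps)
  moreover have "(lam j)\<^sup>2 \<le> (lam j0)\<^sup>2"
    using lam_sorted[of j0 j] j0 assms by (simp add: abs_le_square_iff)
  ultimately show ?thesis by linarith
qed

lemma eigengap: assumes "K' \<le> j" "j < n" "k < K'" and small: "real (K'+1) * e\<^sup>2 \<le> gam\<^sup>2/4"
  shows "gam/2 \<le> \<bar>s k - lam j\<bar>"
proof -
  have "(lam j)\<^sup>2 \<le> (gam/2)\<^sup>2" using tail_eigenvalue_le[OF assms(1,2)] small by (simp add: power_divide)
  then have "\<bar>lam j\<bar> \<le> gam/2" using gam_pos by (simp add: abs_le_square_iff[symmetric])
  then show ?thesis using s_gap[OF assms(3)] by linarith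
qed

text \<open>Davis--Kahan \<open>sin \<Theta>\<close> theorem, via the Sylvester identity \<open>perturbation_overlap\<close>.\<close>

lemma sin_theta_sq_le: assumes small: "real (K'+1) * e\<^sup>2 \<le> gam\<^sup>2/4"
  shows "sin_theta_sq \<le> 4 * real K' * e\<^sup>2 / gam\<^sup>2"
proof -
  have col: "(\<Sum>j\<in>{K'..<n}. (overlap j k)\<^sup>2) \<le> 4 * e\<^sup>2 / gam\<^sup>2" if k: "k < K'" for k
  proof -
    define Eu where "Eu i = (\<Sum>i'<n. (At i i' - P i i') * U i' k)" for i
    define Sy where "Sy j = (\<Sum>i<n. V i j * Eu i)" for j
    have pt: "(overlap j k)\<^sup>2 \<le> 4 / gam\<^sup>2 * (Sy j)\<^sup>2" if j: "j \<in> {K'..<n}" for j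
    proof -
      have "(Sy j)\<^sup>2 = (s k - lam j)\<^sup>2 * (overlap j k)\<^sup>2"
        using perturbation_overlap[of j k] j k
        by (simp add: Sy_def Eu_def power_mult_distrib power2_commute)
      moreover have "(gam/2)\<^sup>2 \<le> (s k - lam j)\<^sup>2"
        using eigengap[of j k, OF _ _ _ small] j k gam_pos by (simp add: abs_le_square_iff[symmetric])
      ultimately have "(gam/2)\<^sup>2 * (overlap j k)\<^sup>2 \<le> (Sy j)\<^sup>2" by (simp add: mult_right_mono)
      then show ?thesis using gam_pos by (simp add: field_simps power_divide)
    qed
    have "(\<Sum>j\<in>{K'..<n}. (overlap j k)\<^sup>2) \<le> (\<Sum>j\<in>{K'..<n}. 4 / gam\<^sup>2 * (Sy j)\<^sup>2)"
      by (rule sum_mono) (rule pt)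
    also have "\<dots> \<le> (\<Sum>j<n. 4 / gam\<^sup>2 * (Sy j)\<^sup>2)" by (rule sum_mono2) auto
    also have "\<dots> = 4 / gam\<^sup>2 * (\<Sum>j<n. (Sy j)\<^sup>2)" by (simp add: sum_distrib_left)
    also have "(\<Sum>j<n. (Sy j)\<^sup>2) = (\<Sum>i<n. (Eu i)\<^sup>2)" unfolding Sy_def by (rule V_parseval)
    also have "4 / gam\<^sup>2 * (\<Sum>i<n. (Eu i)\<^sup>2) \<le> 4 / gam\<^sup>2 * e\<^sup>2"
      using perturbation_le[of "\<lambda>i. U i k"] U_orthonormal[OF k k]
      by (intro mult_left_mono) (simp_all add: Eu_def power2_eq_square)
    finally show ?thesis by simp
  qed
  have "sin_theta_sq \<le> (\<Sum>k<K'. 4 * e\<^sup>2 / gam\<^sup>2)" unfolding sin_theta_sq_def by (rule sum_mono) (simp add: col)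
  then show ?thesis by (simp add: mult_ac)
qed

lemma sin_theta_sq_le_of_le:
  assumes K': "1 \<le> K'" and x: "real K' * e\<^sup>2 / gam\<^sup>2 \<le> x" "x \<le> 1/8"
  shows "sin_theta_sq \<le> 4 * x"
proof -
  have "real K' * e\<^sup>2 / gam\<^sup>2 \<le> 1/8" using x by linarith
  then have "real K' * e\<^sup>2 \<le> gam\<^sup>2 / 8" using gam_pos by (simp add: divide_le_eq)
  moreover have "1 * e\<^sup>2 \<le> real K' * e\<^sup>2" using K' by (intro mult_right_mono) auto
  moreover have "real (K'+1) * e\<^sup>2 = real K' * e\<^sup>2 + e\<^sup>2" by (simp add: algebra_simps)
  ultimately have "real (K'+1) * e\<^sup>2 \<le> gam\<^sup>2/4" by linarith
  then have "sin_theta_sq \<le> 4 * (real K' * e\<^sup>2 / gam\<^sup>2)" using sin_theta_sq_le by simp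
  then show ?thesis using x by linarith
qed

lemma V_mult_U_combination: "(\<Sum>i<n. V i j * (\<Sum>k<K'. U i k * y k)) = (\<Sum>k<K'. overlap j k * y k)"
proof -
  have "(\<Sum>i<n. V i j * (\<Sum>k<K'. U i k * y k)) = (\<Sum>i<n. \<Sum>k<K'. V i j * U i k * y k)"
    by (simp add: sum_distrib_left mult.assoc)
  also have "\<dots> = (\<Sum>k<K'. (\<Sum>i<n. V i j * U i k) * y k)"
    unfolding sum_distrib_right by (rule sum.swap)
  finally show ?thesis by (simp add: overlap_def)
qed

lemma tail_overlap_combination_le:
  "(\<Sum>j\<in>{K'..<n}. (\<Sum>k<K'. overlap j k * y k)\<^sup>2) \<le> sin_theta_sq * (\<Sum>k<K'. (y k)\<^sup>2)"
proof -
  have "(\<Sum>j\<in>{K'..<n}. (\<Sum>k<K'. overlap j k * y k)\<^sup>2)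
      \<le> (\<Sum>j\<in>{K'..<n}. (\<Sum>k<K'. (overlap j k)\<^sup>2) * (\<Sum>k<K'. (y k)\<^sup>2))"
    by (rule sum_mono) (rule sum_product_power2_le)
  also have "\<dots> = sin_theta_sq * (\<Sum>k<K'. (y k)\<^sup>2)"
    by (simp add: sum_distrib_right sin_theta_sq_def sum.swap[of _ "{..<K'}"])
  finally show ?thesis .
qed

lemma overlap_combination_split:
  "(\<Sum>j<K'. (\<Sum>k<K'. overlap j k * y k)\<^sup>2) + (\<Sum>j\<in>{K'..<n}. (\<Sum>k<K'. overlap j k * y k)\<^sup>2)
   = (\<Sum>k<K'. (y k)\<^sup>2)"
proof -
  have "(\<Sum>j<n. (\<Sum>k<K'. overlap j k * y k)\<^sup>2) = (\<Sum>i<n. (\<Sum>k<K'. U i k * y k)\<^sup>2)"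
    using V_parseval[of "\<lambda>i. \<Sum>k<K'. U i k * y k"] by (simp add: V_mult_U_combination)
  then show ?thesis
    using sum_lessThan_split[OF K'_le_n, of "\<lambda>j. (\<Sum>k<K'. overlap j k * y k)\<^sup>2"]
    by (simp add: U_combination_power2)
qed

lemma residual_sum_eq_sin_theta_sq:
  "(\<Sum>i<n. \<Sum>j<K'. (V i j - (\<Sum>k<K'. overlap j k * U i k))\<^sup>2) = sin_theta_sq"
proof -
  have "(\<Sum>i<n. \<Sum>j<K'. (V i j - (\<Sum>k<K'. overlap j k * U i k))\<^sup>2)
      = (\<Sum>j<K'. \<Sum>i<n. (residual j i)\<^sup>2)"
    by (subst sum.swap) (simp add: residual_def mult.commute)
  also have "\<dots> = (\<Sum>j<K'. 1 - (\<Sum>k<K'. (overlap j k)\<^sup>2))"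
    using K'_le_n by (intro sum.cong refl) (simp add: residual_power2_sum)
  also have "\<dots> = (\<Sum>k<K'. 1 - (\<Sum>j<K'. (overlap j k)\<^sup>2))"
    using sum.swap[of "\<lambda>j k. (overlap j k)\<^sup>2" "{..<K'}" "{..<K'}"] by (simp add: sum_subtractf)
  also have "\<dots> = sin_theta_sq"
    unfolding sin_theta_sq_def
    using overlap_col_power2_sum sum_lessThan_split[OF K'_le_n, of "\<lambda>j. (overlap j k)\<^sup>2" for k]
    by (intro sum.cong refl) (simp add: algebra_simps)
  finally show ?thesis .
qed

end

section \<open>Spherical k-means on block-structured eigenvectors\<close>

locale block_eigenvectors = orthonormal_eigen +
  fixes K :: nat and g :: "nat \<Rightarrow> nat" and tt :: "nat \<Rightarrow> real" and c :: "nat \<Rightarrow> nat \<Rightarrow> real"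
  assumes g_lt: "\<And>i. i<n \<Longrightarrow> g i < K"
  and U_block: "\<And>i k. i<n \<Longrightarrow> k<K' \<Longrightarrow> U i k = tt i * c (g i) k"
  and tt_block_norm: "\<And>m. m<K \<Longrightarrow> (\<Sum>i\<in>{i. i<n \<and> g i = m}. (tt i)\<^sup>2) = 1"
begin

lemma sum_over_blocks: "(\<Sum>i<n. (tt i)\<^sup>2 * f (g i)) = (\<Sum>m<K. f m)"
proof -
  have "(\<Sum>i<n. (tt i)\<^sup>2 * f (g i)) = (\<Sum>m<K. \<Sum>i\<in>{x. x \<in> {..<n} \<and> g x = m}. (tt i)\<^sup>2 * f (g i))"
    by (rule sum.group[symmetric]) (auto simp: g_lt)
  also have "\<dots> = (\<Sum>m<K. f m * (\<Sum>i\<in>{i. i<n \<and> g i = m}. (tt i)\<^sup>2))"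
    by (intro sum.cong refl) (auto simp: sum_distrib_left mult.commute)
  finally show ?thesis by (simp add: tt_block_norm)
qed

lemma block_coeffs_orthonormal:
  assumes "k<K'" "l<K'" shows "(\<Sum>m<K. c m k * c m l) = (if k = l then 1 else 0)"
proof -
  have "(\<Sum>i<n. U i k * U i l) = (\<Sum>i<n. (tt i)\<^sup>2 * (c (g i) k * c (g i) l))"
    using assms by (intro sum.cong refl) (simp add: U_block power2_eq_square mult_ac)
  then show ?thesis using U_orthonormal[OF assms] sum_over_blocks[of "\<lambda>m. c m k * c m l"] by simp
qed

lemma block_row_norm_le1: assumes m: "m<K" shows "(\<Sum>k<K'. (c m k)\<^sup>2) \<le> 1"
proof -
  define a where "a = (\<Sum>k<K'. (c m k)\<^sup>2)"
  have "a\<^sup>2 = (\<Sum>k<K'. c m k * c m k)\<^sup>2" by (simp add: a_def power2_eq_square)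
  also have "\<dots> \<le> (\<Sum>l<K. (\<Sum>k<K'. c l k * c m k)\<^sup>2)"
    using m by (intro member_le_sum[where f="\<lambda>l. (\<Sum>k<K'. c l k * c m k)\<^sup>2"]) auto
  also have "\<dots> = a"
    unfolding a_def
    by (rule sum_square_orthonormal_combination[where V="\<lambda>i j. c j i"]) (simp add: block_coeffs_orthonormal)
  finally have "a * a \<le> a * 1" by (simp add: power2_eq_square)
  moreover have "0 \<le> a" unfolding a_def by (simp add: sum_nonneg)
  ultimately show ?thesis unfolding a_def[symmetric] by (cases "a = 0") (simp_all add: mult_le_cancel_left)
qed

end

lemma kmeans_far_points_card_le:
  fixes y z Xc :: "nat \<Rightarrow> nat \<Rightarrow> real" and g t :: "nat \<Rightarrow> nat"
  assumes opt: "(\<Sum>i<n. \<Sum>j<d. (Xc (t i) j - y i j)\<^sup>2) \<le> (\<Sum>i<n. \<Sum>j<d. (z (g i) j - y i j)\<^sup>2)"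
  and err: "(\<Sum>i<n. \<Sum>j<d. (z (g i) j - y i j)\<^sup>2) \<le> \<tau>"
  and \<delta>: "0 < \<delta>"
  shows "real (card {i. i<n \<and> \<delta>/4 \<le> (\<Sum>j<d. (Xc (t i) j - z (g i) j)\<^sup>2)}) \<le> 16 * \<tau> / \<delta>"
proof -
  define D where "D i = (\<Sum>j<d. (Xc (t i) j - z (g i) j)\<^sup>2)" for i
  define S where "S = {i. i<n \<and> \<delta>/4 \<le> D i}"
  have "(\<Sum>i<n. D i) \<le> (\<Sum>i<n. \<Sum>j<d. 2 * (Xc (t i) j - y i j)\<^sup>2 + 2 * (y i j - z (g i) j)\<^sup>2)"
    unfolding D_def by (intro sum_mono) (smt (verit) power2_diff zero_le_power2 power2_sum)
  also have "\<dots> = 2 * (\<Sum>i<n. \<Sum>j<d. (Xc (t i) j - y i j)\<^sup>2) + 2 * (\<Sum>i<n. \<Sum>j<d. (z (g i) j - y i j)\<^sup>2)"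
    by (simp add: sum.distrib sum_distrib_left power2_commute)
  also have "\<dots> \<le> 4 * \<tau>" using opt err by linarith
  finally have sumD: "(\<Sum>i<n. D i) \<le> 4 * \<tau>" .
  have "real (card S) * (\<delta>/4) = (\<Sum>i\<in>S. \<delta>/4)" by simp
  also have "\<dots> \<le> (\<Sum>i\<in>S. D i)" by (rule sum_mono) (simp add: S_def)
  also have "\<dots> \<le> (\<Sum>i<n. D i)" by (rule sum_mono2) (auto simp: S_def D_def intro: sum_nonneg)
  finally have "real (card S) * \<delta> \<le> 16 * \<tau>" using sumD by linarith
  then show ?thesis using \<delta> unfolding S_def D_def by (simp add: pos_le_divide_eq)
qed

lemma exists_perm_relabeling:
  fixes g t :: "nat \<Rightarrow> nat"
  assumes t_lt: "\<And>i. i<n \<Longrightarrow> t i < K"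
  and consistent: "\<And>i i'. i<n \<Longrightarrow> i'<n \<Longrightarrow> i \<notin> S \<Longrightarrow> i' \<notin> S \<Longrightarrow> t i = t i' \<Longrightarrow> g i = g i'"
  and covered: "\<And>m. m<K \<Longrightarrow> \<exists>i<n. i \<notin> S \<and> g i = m"
  obtains \<sigma> where "\<sigma> permutes {..<K}" "\<And>i. i<n \<Longrightarrow> i \<notin> S \<Longrightarrow> \<sigma> (t i) = g i"
proof -
  define rep where "rep m = (SOME i. i<n \<and> i \<notin> S \<and> g i = m)" for m
  have rep: "rep m < n" "rep m \<notin> S" "g (rep m) = m" if "m<K" for m
    using someI_ex[OF covered[OF that]] unfolding rep_def by auto
  define f where "f m = t (rep m)" for m
  have inj: "inj_on f {..<K}"
    by (rule inj_onI) (metis consistent f_def lessThan_iff rep)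
  have img: "f ` {..<K} \<subseteq> {..<K}" using rep t_lt by (auto simp: f_def)
  then have bij: "bij_betw f {..<K} {..<K}"
    using endo_inj_surj[OF _ _ inj] inj by (simp add: bij_betw_def)
  define \<sigma> where "\<sigma> l = (if l < K then inv_into {..<K} f l else l)" for l
  have "bij_betw \<sigma> {..<K} {..<K}"
    using bij_betw_inv_into[OF bij] by (rule bij_betw_cong[THEN iffD1, rotated]) (simp add: \<sigma>_def)
  then have "\<sigma> permutes {..<K}" by (rule bij_imp_permutes) (simp add: \<sigma>_def)
  moreover have "\<sigma> (t i) = g i" if i: "i<n" "i \<notin> S" for i
  proof -
    obtain l where l: "l<K" "t i = f l" using bij t_lt[OF i(1)] by (auto simp: bij_betw_def)
    then have "\<sigma> (t i) = l" using inj img by (auto simp: \<sigma>_def inv_into_f_f)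
    also have "l = g i" using consistent[of "rep l" i] rep[OF l(1)] i l(2) by (simp add: f_def)
    finally show ?thesis .
  qed
  ultimately show ?thesis using that by blast
qed

text \<open>Points within \<open>\<surd>\<delta>/2\<close> of their true centre are labelled consistently by the triangle
  inequality; the remaining points are counted by \<open>kmeans_far_points_card_le\<close>.\<close>

lemma kmeans_misclustering:
  fixes y z Xc :: "nat \<Rightarrow> nat \<Rightarrow> real" and g t :: "nat \<Rightarrow> nat"
  assumes opt: "(\<Sum>i<n. \<Sum>j<d. (Xc (t i) j - y i j)\<^sup>2) \<le> (\<Sum>i<n. \<Sum>j<d. (z (g i) j - y i j)\<^sup>2)"
  and err: "(\<Sum>i<n. \<Sum>j<d. (z (g i) j - y i j)\<^sup>2) \<le> \<tau>"
  and sep: "\<And>m l. m<K \<Longrightarrow> l<K \<Longrightarrow> m\<noteq>l \<Longrightarrow> \<delta> \<le> (\<Sum>j<d. (z m j - z l j)\<^sup>2)"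
  and \<delta>: "0 < \<delta>"
  and g_lt: "\<And>i. i<n \<Longrightarrow> g i < K" and t_lt: "\<And>i. i<n \<Longrightarrow> t i < K"
  and small: "\<And>m. m<K \<Longrightarrow> 16 * \<tau> / \<delta> < real (card {i. i<n \<and> g i = m})"
  obtains S \<sigma> where "S \<subseteq> {..<n}" "real (card S) \<le> 16 * \<tau> / \<delta>" "\<sigma> permutes {..<K}"
    "\<And>i. i<n \<Longrightarrow> i \<notin> S \<Longrightarrow> \<sigma> (t i) = g i"
proof -
  define S where "S = {i. i<n \<and> \<delta>/4 \<le> (\<Sum>j<d. (Xc (t i) j - z (g i) j)\<^sup>2)}"
  have cardS: "real (card S) \<le> 16 * \<tau> / \<delta>"
    unfolding S_def using opt err \<delta> by (rule kmeans_far_points_card_le)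
  have near: "L2_set (\<lambda>j. Xc (t i) j - z (g i) j) {..<d} < sqrt \<delta> / 2" if "i<n" "i \<notin> S" for i
  proof -
    have "L2_set (\<lambda>j. Xc (t i) j - z (g i) j) {..<d} < sqrt (\<delta>/4)"
      using that unfolding L2_set_def S_def by (simp add: real_sqrt_less_mono)
    then show ?thesis by (simp add: real_sqrt_divide)
  qed
  have consistent: "g i = g i'" if "i<n" "i'<n" "i \<notin> S" "i' \<notin> S" "t i = t i'" for i i'
  proof (rule ccontr)
    assume ne: "g i \<noteq> g i'"
    have "sqrt \<delta> \<le> L2_set (\<lambda>j. z (g i) j - z (g i') j) {..<d}"
      unfolding L2_set_def using sep[OF g_lt[OF that(1)] g_lt[OF that(2)] ne] by simp
    also have "\<dots> \<le> L2_set (\<lambda>j. z (g i) j - Xc (t i) j) {..<d} + L2_set (\<lambda>j. Xc (t i) j - z (g i') j) {..<d}"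
      by (rule L2_set_diff_triangle)
    also have "\<dots> < sqrt \<delta>"
      using near[of i] near[of i'] that L2_set_diff_commute[of "\<lambda>j. z (g i) j" "\<lambda>j. Xc (t i) j"] by simp
    finally show False by simp
  qed
  have covered: "\<exists>i<n. i \<notin> S \<and> g i = m" if m: "m<K" for m
  proof (rule ccontr)
    assume "\<not> ?thesis"
    then have "card {i. i<n \<and> g i = m} \<le> card S" by (intro card_mono) (auto simp: S_def)
    then show False using small[OF m] cardS by linarith
  qed
  obtain \<sigma> where "\<sigma> permutes {..<K}" "\<And>i. i<n \<Longrightarrow> i \<notin> S \<Longrightarrow> \<sigma> (t i) = g i"
    using exists_perm_relabeling[where t=t and g=g and S=S, OF t_lt consistent covered] by blast
  moreover have "S \<subseteq> {..<n}" by (auto simp: S_def)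
  ultimately show ?thesis using that cardS by blast
qed

locale spherical_clustering = eigen_perturbation + block_eigenvectors +
  fixes r :: real
  assumes tt_pos: "\<And>i. i<n \<Longrightarrow> 0 < tt i"
  and block_row_pos: "\<And>m. m<K \<Longrightarrow> 0 < (\<Sum>k<K'. (c m k)\<^sup>2)"
  and r_pos: "0 < r"
  and r_le: "\<And>i. i<n \<Longrightarrow> r \<le> (tt i)\<^sup>2 * (\<Sum>k<K'. (c (g i) k)\<^sup>2)"
begin

definition row_norm :: "nat \<Rightarrow> real" where
  "row_norm m = sqrt (\<Sum>k<K'. (c m k)\<^sup>2)"

definition unit_row :: "nat \<Rightarrow> nat \<Rightarrow> real" where
  "unit_row m k = c m k / row_norm m"

text \<open>\<open>center m\<close> is the normalised row \<open>m\<close> of \<open>C\<close> in the coordinates of the top \<open>K'\<close> eigenvectors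
  of \<open>At\<close>, i.e. the true centre of community \<open>m\<close>; \<open>rho i\<close> is the norm of row \<open>i\<close> of \<open>U\<close>.\<close>

definition center :: "nat \<Rightarrow> nat \<Rightarrow> real" where
  "center m j = (\<Sum>k<K'. overlap j k * unit_row m k)"

definition rho :: "nat \<Rightarrow> real" where
  "rho i = tt i * row_norm (g i)"

lemma row_norm_pos: "m<K \<Longrightarrow> 0 < row_norm m"
  unfolding row_norm_def using block_row_pos by simp

lemma row_norm_power2: "(row_norm m)\<^sup>2 = (\<Sum>k<K'. (c m k)\<^sup>2)"
  unfolding row_norm_def by (simp add: sum_nonneg)

lemma unit_row_power2_sum: assumes "m<K" shows "(\<Sum>k<K'. (unit_row m k)\<^sup>2) = 1"
proof -
  have "(\<Sum>k<K'. (unit_row m k)\<^sup>2) = (\<Sum>k<K'. (c m k)\<^sup>2) / (row_norm m)\<^sup>2"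
    by (simp add: unit_row_def power_divide sum_divide_distrib)
  then show ?thesis using row_norm_power2[of m] block_row_pos[OF assms] by simp
qed

lemma center_power2_sum: assumes "m<K"
  shows "(\<Sum>j<K'. (center m j)\<^sup>2) = 1 - (\<Sum>j\<in>{K'..<n}. (\<Sum>k<K'. overlap j k * unit_row m k)\<^sup>2)"
  using overlap_combination_split[of "unit_row m"] unit_row_power2_sum[OF assms] by (simp add: center_def)

lemma center_L2_le1: assumes "m<K" shows "L2_set (center m) {..<K'} \<le> 1"
proof -
  have "(\<Sum>j<K'. (center m j)\<^sup>2) \<le> 1" using center_power2_sum[OF assms] by (simp add: sum_nonneg)
  then show ?thesis unfolding L2_set_def by simp
qed

lemma center_separation: assumes "m<K" "l<K"
  shows "(1 - sin_theta_sq) * (\<Sum>k<K'. (unit_row m k - unit_row l k)\<^sup>2) \<le> (\<Sum>j<K'. (center m j - center l j)\<^sup>2)"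
proof -
  define y where "y k = unit_row m k - unit_row l k" for k
  have zz: "center m j - center l j = (\<Sum>k<K'. overlap j k * y k)" for j
    by (simp add: center_def y_def algebra_simps sum_subtractf)
  have "(\<Sum>j<K'. (center m j - center l j)\<^sup>2) = (\<Sum>k<K'. (y k)\<^sup>2) - (\<Sum>j\<in>{K'..<n}. (\<Sum>k<K'. overlap j k * y k)\<^sup>2)"
    using overlap_combination_split[of y] by (simp add: zz)
  moreover have "(\<Sum>j\<in>{K'..<n}. (\<Sum>k<K'. overlap j k * y k)\<^sup>2) \<le> sin_theta_sq * (\<Sum>k<K'. (y k)\<^sup>2)"
    by (rule tail_overlap_combination_le)
  ultimately show ?thesis by (simp add: y_def algebra_simps)
qed

lemma center_separation_half:
  assumes "sin_theta_sq \<le> 1/2" "m<K" "l<K" "\<delta> \<le> (\<Sum>k<K'. (unit_row m k - unit_row l k)\<^sup>2)" "0 < \<delta>"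
  shows "\<delta>/2 \<le> (\<Sum>j<K'. (center m j - center l j)\<^sup>2)"
proof -
  have "\<delta> * sin_theta_sq \<le> \<delta> * (1/2)" using assms(1,5) by (intro mult_left_mono) auto
  then have "\<delta>/2 \<le> (1 - sin_theta_sq) * \<delta>" by (simp add: algebra_simps)
  also have "\<dots> \<le> (1 - sin_theta_sq) * (\<Sum>k<K'. (unit_row m k - unit_row l k)\<^sup>2)"
    using assms(1,4) by (intro mult_left_mono) auto
  also have "\<dots> \<le> (\<Sum>j<K'. (center m j - center l j)\<^sup>2)" by (rule center_separation[OF assms(2,3)])
  finally show ?thesis .
qed

lemma rho_pos: "i<n \<Longrightarrow> 0 < rho i"
  unfolding rho_def using tt_pos row_norm_pos g_lt by simp

lemma r_le_rho_power2: "i<n \<Longrightarrow> r \<le> (rho i)\<^sup>2"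
  unfolding rho_def using r_le by (simp add: power_mult_distrib row_norm_power2)

lemma unit_row_dist_power2:
  assumes "m<K" "l<K"
  shows "(\<Sum>k<K'. (unit_row m k - unit_row l k)\<^sup>2)
    = 2 - 2 * ((\<Sum>k<K'. c m k * c l k) / (row_norm m * row_norm l))"
  unfolding unit_row_def
  by (rule sum_normalized_diff_power2[OF row_norm_pos[OF assms(1)] row_norm_pos[OF assms(2)]])
    (simp_all add: row_norm_power2)

lemma U_projection_eq:
  assumes "i<n" shows "(\<Sum>k<K'. overlap j k * U i k) = rho i * center (g i) j"
proof -
  have "(\<Sum>k<K'. overlap j k * U i k) = (\<Sum>k<K'. tt i * row_norm (g i) * (overlap j k * unit_row (g i) k))"
    using assms row_norm_pos[of "g i"] g_lt[OF assms] by (intro sum.cong refl) (simp add: U_block unit_row_def)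
  then show ?thesis by (simp add: rho_def center_def sum_distrib_left)
qed

lemma normalized_row_error_le: assumes i: "i<n"
  shows "(\<Sum>j<K'. (normalized_row i j - center (g i) j)\<^sup>2)
     \<le> (8 * (\<Sum>j<K'. (V i j - (\<Sum>k<K'. overlap j k * U i k))\<^sup>2)
        + 2 * (rho i)\<^sup>2 * (1 - (\<Sum>j<K'. (center (g i) j)\<^sup>2))) / r"
proof -
  define d where "d = L2_set (\<lambda>j. V i j - rho i * center (g i) j) {..<K'}"
  define t where "t = L2_set (center (g i)) {..<K'}"
  have gi: "g i < K" using g_lt[OF i] .
  have L: "L2_set (\<lambda>j. normalized_row i j - center (g i) j) {..<K'} \<le> (2 * d + rho i * (1 - t)) / rho i"
    unfolding d_def t_def normalized_row_def
    by (rule L2_set_normalized_diff_le[where a="\<lambda>j. V i j", simplified])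
      (auto simp: rho_pos[OF i] center_L2_le1[OF gi])
  have "(L2_set (\<lambda>j. normalized_row i j - center (g i) j) {..<K'})\<^sup>2
      \<le> (8 * d\<^sup>2 + 2 * (rho i)\<^sup>2 * (1 - t\<^sup>2)) / (rho i)\<^sup>2"
    by (rule power2_le_of_normalized_bound[OF _ _ _ rho_pos[OF i] _ L])
      (auto simp: d_def t_def center_L2_le1[OF gi])
  also have "\<dots> \<le> (8 * d\<^sup>2 + 2 * (rho i)\<^sup>2 * (1 - t\<^sup>2)) / r"
  proof (rule divide_left_mono)
    have "t\<^sup>2 \<le> 1" using center_L2_le1[OF gi] t_def by (simp add: power_le_one)
    then show "0 \<le> 8 * d\<^sup>2 + 2 * (rho i)\<^sup>2 * (1 - t\<^sup>2)" by simp
  next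
    have "0 < (rho i)\<^sup>2" using r_le_rho_power2[OF i] r_pos by linarith
    then show "0 < (rho i)\<^sup>2 * r" using r_pos by simp
  qed (use r_le_rho_power2[OF i] r_pos in auto)
  finally show ?thesis
    unfolding L2_set_power2 d_def t_def by (simp add: U_projection_eq[OF i])
qed

lemma row_norm_power2_center_deficit:
  assumes "m<K"
  shows "(row_norm m)\<^sup>2 * (1 - (\<Sum>j<K'. (center m j)\<^sup>2))
    = (\<Sum>j\<in>{K'..<n}. (\<Sum>k<K'. overlap j k * c m k)\<^sup>2)"
proof -
  have "(row_norm m)\<^sup>2 * (\<Sum>k<K'. overlap j k * unit_row m k)\<^sup>2 = (\<Sum>k<K'. overlap j k * c m k)\<^sup>2" for j
  proof -
    have "row_norm m * (\<Sum>k<K'. overlap j k * unit_row m k) = (\<Sum>k<K'. overlap j k * c m k)"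
      using row_norm_pos[OF assms] by (simp add: sum_distrib_left unit_row_def)
    then show ?thesis by (metis power_mult_distrib)
  qed
  then show ?thesis using center_power2_sum[OF assms] by (simp add: sum_distrib_left)
qed

lemma rho_weighted_deficit_eq: "(\<Sum>i<n. (rho i)\<^sup>2 * (1 - (\<Sum>j<K'. (center (g i) j)\<^sup>2))) = sin_theta_sq"
proof -
  have "(\<Sum>i<n. (rho i)\<^sup>2 * (1 - (\<Sum>j<K'. (center (g i) j)\<^sup>2)))
      = (\<Sum>i<n. (tt i)\<^sup>2 * (\<Sum>j\<in>{K'..<n}. (\<Sum>k<K'. overlap j k * c (g i) k)\<^sup>2))"
    by (intro sum.cong refl)
      (simp add: rho_def power_mult_distrib mult.assoc row_norm_power2_center_deficit g_lt)
  also have "\<dots> = (\<Sum>m<K. \<Sum>j\<in>{K'..<n}. (\<Sum>k<K'. overlap j k * c m k)\<^sup>2)" by (rule sum_over_blocks)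
  also have "\<dots> = (\<Sum>j\<in>{K'..<n}. \<Sum>m<K. (\<Sum>k<K'. c m k * overlap j k)\<^sup>2)"
    by (subst sum.swap) (simp add: mult.commute)
  also have "\<dots> = (\<Sum>j\<in>{K'..<n}. \<Sum>k<K'. (overlap j k)\<^sup>2)"
    by (intro sum.cong refl sum_square_orthonormal_combination) (simp add: block_coeffs_orthonormal)
  also have "\<dots> = sin_theta_sq" unfolding sin_theta_sq_def by (rule sum.swap)
  finally show ?thesis .
qed

lemma normalized_rows_error_le: "(\<Sum>i<n. \<Sum>j<K'. (normalized_row i j - center (g i) j)\<^sup>2) \<le> 10 * sin_theta_sq / r"
proof -
  have "(\<Sum>i<n. \<Sum>j<K'. (normalized_row i j - center (g i) j)\<^sup>2)
     \<le> (\<Sum>i<n. (8 * (\<Sum>j<K'. (V i j - (\<Sum>k<K'. overlap j k * U i k))\<^sup>2)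
        + 2 * (rho i)\<^sup>2 * (1 - (\<Sum>j<K'. (center (g i) j)\<^sup>2))) / r)"
    by (rule sum_mono) (simp add: normalized_row_error_le)
  also have "\<dots> = (8 * (\<Sum>i<n. \<Sum>j<K'. (V i j - (\<Sum>k<K'. overlap j k * U i k))\<^sup>2)
      + 2 * (\<Sum>i<n. (rho i)\<^sup>2 * (1 - (\<Sum>j<K'. (center (g i) j)\<^sup>2)))) / r"
    by (simp add: sum_divide_distrib[symmetric] sum.distrib sum_distrib_left mult.assoc)
  also have "\<dots> = 10 * sin_theta_sq / r" by (simp add: residual_sum_eq_sin_theta_sq rho_weighted_deficit_eq)
  finally show ?thesis .
qed

text \<open>The constant \<open>1280 = 16 \<cdot> 10 \<cdot> 4 \<cdot> 2\<close> collects the factors of \<open>kmeans_misclustering\<close>,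
  \<open>normalized_rows_error_le\<close>, \<open>sin_theta_sq_le_of_le\<close> and \<open>center_separation_half\<close>.\<close>

lemma misclustered_nodes_le:
  fixes t :: "nat \<Rightarrow> nat" and Xc :: "nat \<Rightarrow> nat \<Rightarrow> real" and \<delta> x :: real
  assumes opt: "(\<Sum>i<n. \<Sum>j<K'. (Xc (t i) j - normalized_row i j)\<^sup>2)
      \<le> (\<Sum>i<n. \<Sum>j<K'. (center (g i) j - normalized_row i j)\<^sup>2)"
  and t_lt: "\<And>i. i<n \<Longrightarrow> t i < K"
  and unit_row_sep: "\<And>m l. m<K \<Longrightarrow> l<K \<Longrightarrow> m\<noteq>l \<Longrightarrow> \<delta> \<le> (\<Sum>k<K'. (unit_row m k - unit_row l k)\<^sup>2)"
  and \<delta>: "0 < \<delta>"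
  and K'_pos: "1 \<le> K'"
  and x_ge: "real K' * e\<^sup>2 / gam\<^sup>2 \<le> x" and x_small: "x \<le> 1/8"
  and small: "\<And>m. m<K \<Longrightarrow> 1280 * x / (r * \<delta>) < real (card {i. i<n \<and> g i = m})"
  obtains S \<sigma> where "S \<subseteq> {..<n}" "real (card S) \<le> 1280 * x / (r * \<delta>)"
    "\<sigma> permutes {..<K}" "\<And>i. i<n \<Longrightarrow> i \<notin> S \<Longrightarrow> \<sigma> (t i) = g i"
proof -
  have eb: "sin_theta_sq \<le> 4 * x" by (rule sin_theta_sq_le_of_le[OF K'_pos x_ge x_small])
  then have eps_half: "sin_theta_sq \<le> 1/2" using x_small by linarith
  have sep2: "\<delta>/2 \<le> (\<Sum>j<K'. (center m j - center l j)\<^sup>2)" if "m<K" "l<K" "m\<noteq>l" for m l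
    using center_separation_half[OF eps_half that(1,2) unit_row_sep[OF that] \<delta>] .
  have err: "(\<Sum>i<n. \<Sum>j<K'. (center (g i) j - normalized_row i j)\<^sup>2) \<le> 10 * sin_theta_sq / r"
    using normalized_rows_error_le by (simp add: power2_commute)
  have bnd: "16 * (10 * sin_theta_sq / r) / (\<delta>/2) \<le> 1280 * x / (r * \<delta>)"
  proof -
    have "16 * (10 * sin_theta_sq / r) / (\<delta>/2) = 320 * sin_theta_sq / (r * \<delta>)" by (simp add: field_simps)
    also have "\<dots> \<le> 320 * (4 * x) / (r * \<delta>)"
      using eb r_pos \<delta> by (intro divide_right_mono mult_left_mono) auto
    finally show ?thesis by simp
  qed
  have small2: "16 * (10 * sin_theta_sq / r) / (\<delta>/2) < real (card {i. i<n \<and> g i = m})"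
    if "m<K" for m
    using small[OF that] bnd by linarith
  have "\<delta>/2 > 0" using \<delta> by simp
  then obtain S \<sigma> where "S \<subseteq> {..<n}" "real (card S) \<le> 16 * (10 * sin_theta_sq / r) / (\<delta>/2)"
    "\<sigma> permutes {..<K}" "\<And>i. i<n \<Longrightarrow> i \<notin> S \<Longrightarrow> \<sigma> (t i) = g i"
    using kmeans_misclustering[where y=normalized_row and z=center and Xc=Xc and t=t and g=g
          and n=n and d=K' and K=K, OF opt err sep2 _ g_lt t_lt small2] by blast
  then show ?thesis using that bnd by (meson order_trans)
qed

end

locale dcsbm_eigen = orthonormal_eigen +
  fixes K :: nat and g :: "nat \<Rightarrow> nat" and th :: "nat \<Rightarrow> real" and Bf :: "nat \<Rightarrow> nat \<Rightarrow> real"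
  assumes s_nonzero: "\<And>k. k<K' \<Longrightarrow> s k \<noteq> 0"
  and g_lt: "\<And>i. i<n \<Longrightarrow> g i < K"
  and th_pos: "\<And>i. i<n \<Longrightarrow> 0 < th i"
  and blocks_nonempty: "\<And>m. m<K \<Longrightarrow> \<exists>i<n. g i = m"
  and P_model: "\<And>i i'. i<n \<Longrightarrow> i'<n \<Longrightarrow> P i i' = th i * th i' * Bf (g i) (g i')"
begin

definition block :: "nat \<Rightarrow> nat set" where
  "block m = {i. i<n \<and> g i = m}"

definition block_norm :: "nat \<Rightarrow> real" where
  "block_norm m = sqrt (\<Sum>i\<in>block m. (th i)\<^sup>2)"

definition tt :: "nat \<Rightarrow> real" where
  "tt i = th i / block_norm (g i)"

text \<open>From \<open>P U = U diag(s)\<close> and the block structure of \<open>P\<close>: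
  \<open>U i k = th i (\<Sum>i'. th i' Bf (g i) (g i') U i' k) / s k\<close>.\<close>

definition c :: "nat \<Rightarrow> nat \<Rightarrow> real" where
  "c m k = block_norm m * (\<Sum>i'<n. th i' * Bf m (g i') * U i' k) / s k"

lemma block_norm_power2: "(block_norm m)\<^sup>2 = (\<Sum>i\<in>block m. (th i)\<^sup>2)"
  unfolding block_norm_def by (simp add: sum_nonneg)

lemma block_norm_pos: assumes "m<K" shows "0 < block_norm m"
proof -
  obtain i where i: "i<n" "g i = m" using blocks_nonempty[OF assms] by blast
  have "0 < (th i)\<^sup>2" using th_pos[OF i(1)] by simp
  also have "(th i)\<^sup>2 \<le> (\<Sum>i\<in>block m. (th i)\<^sup>2)"
    using i by (intro member_le_sum) (auto simp: block_def)
  finally show ?thesis unfolding block_norm_def by simp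
qed

lemma tt_pos: "i<n \<Longrightarrow> 0 < tt i"
  unfolding tt_def using th_pos block_norm_pos g_lt by simp

lemma tt_block_norm: assumes "m<K" shows "(\<Sum>i\<in>{i. i<n \<and> g i = m}. (tt i)\<^sup>2) = 1"
proof -
  have "(\<Sum>i\<in>{i. i<n \<and> g i = m}. (tt i)\<^sup>2) = (\<Sum>i\<in>block m. (th i)\<^sup>2) / (block_norm m)\<^sup>2"
    unfolding block_def by (simp add: tt_def power_divide sum_divide_distrib)
  also have "\<dots> = 1" using block_norm_pos[OF assms] by (simp add: block_norm_power2[symmetric])
  finally show ?thesis .
qed

lemma U_block: assumes i: "i<n" and k: "k<K'" shows "U i k = tt i * c (g i) k"
proof -
  have "s k * U i k = (\<Sum>i'<n. P i i' * U i' k)" using P_mult_U[OF k i] by simp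
  also have "\<dots> = th i * (\<Sum>i'<n. th i' * Bf (g i) (g i') * U i' k)"
    using i by (simp add: P_model sum_distrib_left mult_ac)
  finally show ?thesis
    using s_nonzero[OF k] block_norm_pos[OF g_lt[OF i]] by (simp add: tt_def c_def field_simps)
qed

end

sublocale dcsbm_eigen \<subseteq> block_eigenvectors n K' U s P K g tt c
  by unfold_locales (simp_all add: g_lt U_block tt_block_norm)

context dcsbm_eigen
begin

lemma c_eq_block_sum: assumes m: "m<K" and k: "k<K'" shows "c m k = (\<Sum>i\<in>block m. tt i * U i k)"
proof -
  have "(\<Sum>i\<in>block m. tt i * U i k) = (\<Sum>i\<in>block m. (tt i)\<^sup>2 * c m k)"
    by (intro sum.cong refl) (auto simp: block_def U_block k power2_eq_square)
  also have "\<dots> = c m k" using tt_block_norm[OF m] by (simp add: sum_distrib_right[symmetric] block_def)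
  finally show ?thesis by simp
qed

lemma block_row_pos_of_le:
  assumes "0 < r" "\<And>i. i<n \<Longrightarrow> r \<le> (tt i)\<^sup>2 * (\<Sum>k<K'. (c (g i) k)\<^sup>2)" "m<K"
  shows "0 < (\<Sum>k<K'. (c m k)\<^sup>2)"
proof -
  obtain i where i: "i<n" "g i = m" using blocks_nonempty[OF assms(3)] by blast
  have "r \<le> (tt i)\<^sup>2 * (\<Sum>k<K'. (c m k)\<^sup>2)" using assms(2)[OF i(1)] i(2) by simp
  then have "0 < (tt i)\<^sup>2 * (\<Sum>k<K'. (c m k)\<^sup>2)" using assms(1) by linarith
  then show ?thesis by (simp add: zero_less_mult_iff)
qed

lemma block_coeffs_factorize_Bf: assumes m: "m<K" and l: "l<K"
  shows "(\<Sum>k<K'. c m k * s k * c l k) = block_norm m * Bf m l * block_norm l"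
proof -
  have "(\<Sum>k<K'. c m k * s k * c l k)
      = (\<Sum>k<K'. \<Sum>i\<in>block m. \<Sum>i'\<in>block l. tt i * tt i' * (U i k * s k * U i' k))"
    by (intro sum.cong refl) (simp add: c_eq_block_sum m l sum_distrib_left sum_distrib_right mult_ac)
  also have "\<dots> = (\<Sum>i\<in>block m. \<Sum>i'\<in>block l. tt i * tt i' * (\<Sum>k<K'. U i k * s k * U i' k))"
    by (simp add: sum_distrib_left sum.swap[of _ "{..<K'}"])
  also have "\<dots> = (\<Sum>i\<in>block m. \<Sum>i'\<in>block l. (th i)\<^sup>2 / block_norm m * ((th i')\<^sup>2 / block_norm l) * Bf m l)"
  proof (intro sum.cong refl)
    fix i i' assume "i \<in> block m" "i' \<in> block l"
    then have "i<n" "i'<n" "g i = m" "g i' = l" by (auto simp: block_def)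
    then show "tt i * tt i' * (\<Sum>k<K'. U i k * s k * U i' k)
        = (th i)\<^sup>2 / block_norm m * ((th i')\<^sup>2 / block_norm l) * Bf m l"
      using P_eq[of i i'] P_model[of i i'] by (simp add: tt_def power2_eq_square)
  qed
  also have "\<dots> = ((\<Sum>i\<in>block m. (th i)\<^sup>2) / block_norm m) * ((\<Sum>i'\<in>block l. (th i')\<^sup>2) / block_norm l) * Bf m l"
    by (simp add: sum_distrib_left sum_distrib_right sum_divide_distrib mult_ac)
  also have "\<dots> = block_norm m * Bf m l * block_norm l"
    using block_norm_pos[OF m] block_norm_pos[OF l]
    by (simp only: block_norm_power2[symmetric]) (simp add: power2_eq_square)
  finally show ?thesis .
qed

end

section \<open>Matrices\<close>

lemma index_mult_mat_sum: assumes "dim_col A = dim_row B" "i < dim_row A" "j < dim_col B"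
  shows "(A * B) $$ (i,j) = (\<Sum>k<dim_row B. A $$ (i,k) * B $$ (k,j))"
  using assms by (auto simp: scalar_prod_def lessThan_atLeast0 intro!: sum.cong)

lemma index_diagv: "i < dim_vec v \<Longrightarrow> j < dim_vec v \<Longrightarrow> diagv v $$ (i,j) = (if i = j then v $ i else 0)"
  unfolding diagv_def by simp

lemma dim_diagv [simp]: "dim_row (diagv v) = dim_vec v" "dim_col (diagv v) = dim_vec v"
  unfolding diagv_def by simp_all

lemma memb_mat_row: assumes "memb_mat n K T" "i<n"
  shows "comm K T i < K" "\<And>k. k<K \<Longrightarrow> T $$ (i,k) = (if k = comm K T i then 1 else 0)"
proof -
  have "\<forall>i<n. card {k. k < K \<and> T $$ (i,k) = 1} = 1" using assms(1) by (simp add: memb_mat_def)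
  then have c1: "card {k. k < K \<and> T $$ (i,k) = 1} = 1" using assms(2) by blast
  obtain k0 where k0: "{k. k < K \<and> T $$ (i,k) = 1} = {k0}" using card_1_singletonE[OF c1] by blast
  have k0K: "k0 < K" "T $$ (i,k0) = 1" using k0 by auto
  have uniq: "\<And>k. k < K \<Longrightarrow> T $$ (i,k) = 1 \<Longrightarrow> k = k0" using k0 by auto
  have cm: "comm K T i = k0" unfolding comm_def
    using k0K uniq by (intro the_equality) blast+
  show "comm K T i < K" using cm k0K by simp
  fix k assume k: "k<K"
  have "\<forall>i<n. \<forall>k<K. T $$ (i,k) = 0 \<or> T $$ (i,k) = 1" using assms(1) by (simp add: memb_mat_def)
  then have disj: "T $$ (i,k) = 0 \<or> T $$ (i,k) = 1" using assms(2) k by blast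
  show "T $$ (i,k) = (if k = comm K T i then 1 else 0)"
  proof (cases "k = k0")
    case True
    then show ?thesis using cm k0K(2) by simp
  next
    case False
    then have "T $$ (i,k) \<noteq> 1" using uniq[OF k] by blast
    then have "T $$ (i,k) = 0" using disj by blast
    then show ?thesis using cm False by simp
  qed
qed

lemma memb_mat_carrier: "memb_mat n K T \<Longrightarrow> T \<in> carrier_mat n K" unfolding memb_mat_def by blast

lemma memb_mat_mult_index:
  assumes T: "memb_mat n K T" and Xm: "Xm \<in> carrier_mat K d" and i: "i<n" and j: "j<d"
  shows "(T * Xm) $$ (i,j) = Xm $$ (comm K T i, j)"
proof -
  have Tc: "T \<in> carrier_mat n K" using memb_mat_carrier[OF T] .
  have "(T * Xm) $$ (i,j) = (\<Sum>k<K. T $$ (i,k) * Xm $$ (k,j))"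
    using Tc Xm i j by (subst index_mult_mat_sum) auto
  also have "\<dots> = (\<Sum>k<K. (if k = comm K T i then 1 else 0) * Xm $$ (k,j))"
    by (intro sum.cong refl) (simp add: memb_mat_row(2)[OF T i])
  also have "\<dots> = Xm $$ (comm K T i, j)" using memb_mat_row(1)[OF T i] by (simp add: delta_mult)
  finally show ?thesis .
qed

lemma frob_sq_memb_mult:
  assumes T: "memb_mat n K T" and Xm: "Xm \<in> carrier_mat K d" and Y: "Y \<in> carrier_mat n d"
  shows "frob_sq (T * Xm - Y) = (\<Sum>i<n. \<Sum>j<d. (Xm $$ (comm K T i, j) - Y $$ (i,j))\<^sup>2)"
proof -
  have Tc: "T \<in> carrier_mat n K" using memb_mat_carrier[OF T] .
  have dims: "dim_row (T * Xm - Y) = n" "dim_col (T * Xm - Y) = d" using Tc Xm Y by auto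
  show ?thesis unfolding frob_sq_def dims
  proof (intro sum.cong refl)
    fix i j assume "i \<in> {..<n}" "j \<in> {..<d}"
    then have ij: "i<n" "j<d" by auto
    have "(T * Xm - Y) $$ (i,j) = (T * Xm) $$ (i,j) - Y $$ (i,j)"
      using ij Tc Xm Y by (simp del: index_mult_mat)
    then show "((T * Xm - Y) $$ (i,j))\<^sup>2 = (Xm $$ (comm K T i, j) - Y $$ (i,j))\<^sup>2"
      using memb_mat_mult_index[OF T Xm ij] by simp
  qed
qed

lemma vnorm_eq_sqrt_sum: "vnorm x = sqrt (\<Sum>i<dim_vec x. (x $ i)\<^sup>2)"
  unfolding vnorm_def scalar_prod_def by (simp add: power2_eq_square lessThan_atLeast0)

lemma scalar_prod_row_sum:
  "M \<in> carrier_mat n n \<Longrightarrow> i<n \<Longrightarrow> v \<in> carrier_vec n \<Longrightarrow> row M i \<bullet> v = (\<Sum>i'<n. M $$ (i,i') * v $ i')"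
  by (auto simp: scalar_prod_def lessThan_atLeast0 intro!: sum.cong)

lemma vnorm_mult_le_frob:
  assumes M: "M \<in> carrier_mat n n" and v: "v \<in> carrier_vec n" "vnorm v \<le> 1"
  shows "vnorm (M *\<^sub>v v) \<le> sqrt (frob_sq M)"
proof -
  have "(\<Sum>i<n. ((M *\<^sub>v v) $ i)\<^sup>2) = (\<Sum>i<n. (\<Sum>i'<n. M $$ (i,i') * v $ i')\<^sup>2)"
    using M v by (simp add: scalar_prod_row_sum)
  also have "\<dots> \<le> (\<Sum>i<n. (\<Sum>i'<n. (M $$ (i,i'))\<^sup>2) * (\<Sum>i'<n. (v $ i')\<^sup>2))"
    by (intro sum_mono sum_product_power2_le)
  also have "\<dots> = frob_sq M * (\<Sum>i'<n. (v $ i')\<^sup>2)"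
    using M by (simp add: frob_sq_def sum_distrib_right)
  also have "\<dots> \<le> frob_sq M * 1"
  proof (rule mult_left_mono)
    show "(\<Sum>i'<n. (v $ i')\<^sup>2) \<le> 1" using v vnorm_eq_sqrt_sum[of v] by simp
    show "0 \<le> frob_sq M" unfolding frob_sq_def by (intro sum_nonneg) auto
  qed
  finally show ?thesis unfolding vnorm_eq_sqrt_sum using M by simp
qed

lemma vnorm_mult_le_spec_norm:
  assumes M: "M \<in> carrier_mat n n" and v: "v \<in> carrier_vec n" "vnorm v \<le> 1"
  shows "vnorm (M *\<^sub>v v) \<le> spec_norm M"
proof -
  have "bdd_above {vnorm (M *\<^sub>v x) | x. x \<in> carrier_vec (dim_col M) \<and> vnorm x \<le> 1}"
    using vnorm_mult_le_frob[OF M] M unfolding bdd_above_def by auto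
  then show ?thesis unfolding spec_norm_def using M v by (intro cSup_upper) auto
qed

lemma spec_norm_nonneg: assumes M: "M \<in> carrier_mat n n" shows "0 \<le> spec_norm M"
proof -
  have "0 \<le> vnorm (M *\<^sub>v 0\<^sub>v n)" unfolding vnorm_eq_sqrt_sum by (intro real_sqrt_ge_zero sum_nonneg) simp
  also have "\<dots> \<le> spec_norm M" by (rule vnorm_mult_le_spec_norm[OF M]) (auto simp: vnorm_def)
  finally show ?thesis .
qed

lemma sum_mult_power2_le_spec_norm:
  assumes M: "M \<in> carrier_mat n n"
  shows "(\<Sum>i<n. (\<Sum>i'<n. M $$ (i,i') * x i')\<^sup>2) \<le> (spec_norm M)\<^sup>2 * (\<Sum>i<n. (x i)\<^sup>2)"
proof -
  define N where "N = sqrt (\<Sum>i<n. (x i)\<^sup>2)"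
  define Mx where "Mx = sqrt (\<Sum>i<n. (\<Sum>i'<n. M $$ (i,i') * x i')\<^sup>2)"
  show ?thesis
  proof (cases "N = 0")
    case True
    then have "\<forall>i<n. x i = 0" unfolding N_def by (simp add: sum_nonneg_eq_0_iff)
    then show ?thesis by simp
  next
    case False
    then have Npos: "0 < N" unfolding N_def by (simp add: sum_nonneg order_le_neq_trans)
    define y where "y = vec n (\<lambda>i. x i / N)"
    have yc: "y \<in> carrier_vec n" unfolding y_def by simp
    have "vnorm y = sqrt ((\<Sum>i<n. (x i)\<^sup>2) / N\<^sup>2)"
      unfolding vnorm_eq_sqrt_sum y_def by (simp add: power_divide sum_divide_distrib)
    also have "\<dots> = 1" using Npos unfolding N_def by (simp add: sum_nonneg)
    finally have y1: "vnorm y = 1" .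
    have "vnorm (M *\<^sub>v y) = sqrt (\<Sum>i<n. (\<Sum>i'<n. M $$ (i,i') * x i')\<^sup>2 / N\<^sup>2)"
      unfolding vnorm_eq_sqrt_sum using M yc
      by (simp add: scalar_prod_row_sum y_def sum_divide_distrib[symmetric] power_divide)
    also have "\<dots> = Mx / N"
      using Npos by (simp add: Mx_def sum_divide_distrib[symmetric] real_sqrt_divide)
    finally have "Mx / N \<le> spec_norm M" using vnorm_mult_le_spec_norm[OF M yc] y1 by simp
    then have "Mx \<le> spec_norm M * N" using Npos by (simp add: pos_divide_le_eq)
    then have "Mx\<^sup>2 \<le> (spec_norm M * N)\<^sup>2" by (intro power_mono) (auto simp: Mx_def intro!: sum_nonneg)
    then show ?thesis unfolding Mx_def N_def by (simp add: power_mult_distrib sum_nonneg)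
  qed
qed

lemma index_Pmat:
  assumes T: "memb_mat n K T" and B: "B \<in> carrier_mat K K" and th: "th \<in> carrier_vec n"
  and i: "i<n" and i': "i'<n"
  shows "Pmat T B th $$ (i,i') = th $ i * th $ i' * B $$ (comm K T i, comm K T i')"
proof -
  have Tc: "T \<in> carrier_mat n K" using memb_mat_carrier[OF T] .
  have dth: "dim_vec th = n" using th by simp
  have s1: "(diagv th * T) $$ (a,k) = th $ a * T $$ (a,k)" if "a<n" "k<K" for a k
  proof -
    have "(diagv th * T) $$ (a,k) = (\<Sum>j<n. diagv th $$ (a,j) * T $$ (j,k))"
      using that Tc dth by (subst index_mult_mat_sum) auto
    also have "\<dots> = (\<Sum>j<n. (if a = j then 1 else 0) * (th $ a * T $$ (j,k)))"
      using that dth by (intro sum.cong refl) (simp add: index_diagv)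
    also have "\<dots> = th $ a * T $$ (a,k)" using that by (simp add: delta_mult)
    finally show ?thesis .
  qed
  have s2: "(diagv th * T * B) $$ (a,l) = th $ a * B $$ (comm K T a, l)" if "a<n" "l<K" for a l
  proof -
    have "(diagv th * T * B) $$ (a,l) = (\<Sum>k<K. (diagv th * T) $$ (a,k) * B $$ (k,l))"
      using that Tc dth B by (subst index_mult_mat_sum) auto
    also have "\<dots> = (\<Sum>k<K. (if k = comm K T a then 1 else 0) * (th $ a * B $$ (k,l)))"
      using that by (intro sum.cong refl) (simp add: s1 memb_mat_row(2)[OF T])
    also have "\<dots> = th $ a * B $$ (comm K T a, l)" using memb_mat_row(1)[OF T that(1)] by (simp add: delta_mult)
    finally show ?thesis .
  qed
  have s3: "(diagv th * T * B * T\<^sup>T) $$ (a,b) = th $ a * B $$ (comm K T a, comm K T b)" if "a<n" "b<n" for a b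
  proof -
    have "(diagv th * T * B * T\<^sup>T) $$ (a,b) = (\<Sum>l<K. (diagv th * T * B) $$ (a,l) * T\<^sup>T $$ (l,b))"
      using that Tc dth B by (subst index_mult_mat_sum) auto
    also have "\<dots> = (\<Sum>l<K. (if l = comm K T b then 1 else 0) * (th $ a * B $$ (comm K T a, l)))"
      using that Tc by (intro sum.cong refl) (simp add: s2 memb_mat_row(2)[OF T] mult.commute)
    also have "\<dots> = th $ a * B $$ (comm K T a, comm K T b)"
      using memb_mat_row(1)[OF T that(2)] by (simp add: delta_mult)
    finally show ?thesis .
  qed
  have "Pmat T B th $$ (i,i') = (\<Sum>j<n. (diagv th * T * B * T\<^sup>T) $$ (i,j) * diagv th $$ (j,i'))"
    unfolding Pmat_def using i i' Tc dth B by (subst index_mult_mat_sum) auto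
  also have "\<dots> = (\<Sum>j<n. (if j = i' then 1 else 0) * (th $ i * B $$ (comm K T i, comm K T j) * th $ j))"
    using i i' dth by (intro sum.cong refl) (auto simp: s3 index_diagv)
  also have "\<dots> = th $ i * B $$ (comm K T i, comm K T i') * th $ i'" using i' by (simp add: delta_mult)
  also have "\<dots> = th $ i * th $ i' * B $$ (comm K T i, comm K T i')" by (simp add: mult_ac)
  finally show ?thesis .
qed

lemma Pmat_carrier: assumes "memb_mat n K T" "B \<in> carrier_mat K K" "th \<in> carrier_vec n"
  shows "Pmat T B th \<in> carrier_mat n n"
  using assms memb_mat_carrier[OF assms(1)] unfolding Pmat_def by auto

lemma index_mult_diagonal_transpose:
  fixes W S :: "real mat"
  assumes W: "W \<in> carrier_mat m r" and S: "S \<in> carrier_mat r r" and dS: "diagonal_mat S"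
  and i: "i<m" and i': "i'<m"
  shows "(W * S * W\<^sup>T) $$ (i,i') = (\<Sum>k<r. W $$ (i,k) * S $$ (k,k) * W $$ (i',k))"
proof -
  have s1: "(W * S) $$ (a,k) = W $$ (a,k) * S $$ (k,k)" if "a<m" "k<r" for a k
  proof -
    have "(W * S) $$ (a,k) = (\<Sum>j<r. W $$ (a,j) * S $$ (j,k))" using that W S by (subst index_mult_mat_sum) auto
    also have "\<dots> = (\<Sum>j<r. (if j = k then 1 else 0) * (W $$ (a,j) * S $$ (j,k)))"
      using dS S that unfolding diagonal_mat_def by (intro sum.cong refl) auto
    also have "\<dots> = W $$ (a,k) * S $$ (k,k)" using that by (simp add: delta_mult)
    finally show ?thesis .
  qed
  have "(W * S * W\<^sup>T) $$ (i,i') = (\<Sum>k<r. (W * S) $$ (i,k) * W\<^sup>T $$ (k,i'))"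
    using i i' W S by (subst index_mult_mat_sum) auto
  also have "\<dots> = (\<Sum>k<r. W $$ (i,k) * S $$ (k,k) * W $$ (i',k))"
    using i i' W by (intro sum.cong refl) (simp add: s1)
  finally show ?thesis .
qed

lemma eig_decomp_index: fixes W S :: "real mat" assumes "eig_decomp m r M W S" "i<m" "i'<m"
  shows "M $$ (i,i') = (\<Sum>k<r. W $$ (i,k) * S $$ (k,k) * W $$ (i',k))"
proof -
  have W: "W \<in> carrier_mat m r" and S: "S \<in> carrier_mat r r" and dS: "diagonal_mat S"
    and M: "M = W * S * W\<^sup>T" using assms(1) unfolding eig_decomp_def by auto
  show ?thesis unfolding M by (rule index_mult_diagonal_transpose[OF W S dS assms(2,3)])
qed

lemma orthonormal_cols_sum:
  fixes W :: "real mat"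
  assumes W: "W \<in> carrier_mat m r" and WW: "W\<^sup>T * W = 1\<^sub>m r" and k: "k<r" and l: "l<r"
  shows "(\<Sum>i<m. W $$ (i,k) * W $$ (i,l)) = (if k = l then 1 else 0)"
proof -
  have "(W\<^sup>T * W) $$ (k,l) = (\<Sum>i<m. W\<^sup>T $$ (k,i) * W $$ (i,l))" using W k l by (subst index_mult_mat_sum) auto
  also have "\<dots> = (\<Sum>i<m. W $$ (i,k) * W $$ (i,l))" using W k by (intro sum.cong refl) auto
  finally show ?thesis using WW k l by simp
qed

lemma orthonormal_square_rows_sum:
  fixes W :: "real mat"
  assumes W: "W \<in> carrier_mat m m" and WW: "W\<^sup>T * W = 1\<^sub>m m" and i: "i<m" and i': "i'<m"
  shows "(\<Sum>j<m. W $$ (i,j) * W $$ (i',j)) = (if i = i' then 1 else 0)"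
proof -
  have WW': "W * W\<^sup>T = 1\<^sub>m m" using mat_mult_left_right_inverse[of "W\<^sup>T" m W] W WW by simp
  have "(W * W\<^sup>T) $$ (i,i') = (\<Sum>j<m. W $$ (i,j) * W\<^sup>T $$ (j,i'))"
    using W i i' by (subst index_mult_mat_sum) auto
  also have "\<dots> = (\<Sum>j<m. W $$ (i,j) * W $$ (i',j))" using W i' by (intro sum.cong refl) auto
  finally show ?thesis using WW' i i' by simp
qed

lemma top_eigvecsE: assumes "top_eigvecs n K' At Uh"
  obtains V lam where "V \<in> carrier_mat n n" "V\<^sup>T * V = 1\<^sub>m n"
    "\<And>i i'. i<n \<Longrightarrow> i'<n \<Longrightarrow> At $$ (i,i') = (\<Sum>j<n. V $$ (i,j) * lam j * V $$ (i',j))"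
    "\<And>i j. i \<le> j \<Longrightarrow> j < n \<Longrightarrow> \<bar>lam j\<bar> \<le> \<bar>lam i\<bar>"
    "Uh = mat n K' (\<lambda>(i,j). V $$ (i,j))" "At \<in> carrier_mat n n"
proof -
  obtain V lam where V: "V \<in> carrier_mat n n" "V\<^sup>T * V = 1\<^sub>m n"
    and At: "At = V * diagv (vec n lam) * V\<^sup>T" and srt: "\<And>i j. i \<le> j \<Longrightarrow> j < n \<Longrightarrow> \<bar>lam j\<bar> \<le> \<bar>lam i\<bar>"
    and Uh: "Uh = mat n K' (\<lambda>(i,j). V $$ (i,j))"
    using assms unfolding top_eigvecs_def by blast
  have dg: "diagonal_mat (diagv (vec n lam))" unfolding diagonal_mat_def diagv_def by simp
  have At_idx: "At $$ (i,i') = (\<Sum>j<n. V $$ (i,j) * lam j * V $$ (i',j))" if "i<n" "i'<n" for i i'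
  proof -
    have "At $$ (i,i') = (\<Sum>k<n. V $$ (i,k) * diagv (vec n lam) $$ (k,k) * V $$ (i',k))"
      unfolding At by (rule index_mult_diagonal_transpose[OF V(1) _ dg that]) (simp add: diagv_def)
    also have "\<dots> = (\<Sum>j<n. V $$ (i,j) * lam j * V $$ (i',j))"
      by (intro sum.cong refl) (simp add: diagv_def)
    finally show ?thesis .
  qed
  have "At \<in> carrier_mat n n" using V(1) by (intro carrier_matI) (auto simp: At)
  then show ?thesis using that[OF V At_idx srt Uh] by blast
qed

lemma Gset_memb_mat: "memb_mat n K T \<Longrightarrow> Gset T k = {i. i<n \<and> T $$ (i,k) = 1}"
  unfolding Gset_def using memb_mat_carrier by (metis carrier_matD(1))

lemma Gset_eq_comm:
  assumes T: "memb_mat n K T" and k: "k<K" shows "Gset T k = {i. i<n \<and> comm K T i = k}"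
  unfolding Gset_memb_mat[OF T] using memb_mat_row[OF T] k by (auto split: if_splits)

lemma communities_le_nodes:
  assumes T: "memb_mat n K T" and G: "\<And>k. k<K \<Longrightarrow> 1 \<le> card (Gset T k)" shows "K \<le> n"
proof -
  have ex: "\<exists>i. i \<in> Gset T k" if "k<K" for k using G[OF that] by (metis card.empty ex_in_conv not_one_le_zero)
  define f where "f k = (SOME i. i \<in> Gset T k)" for k
  have f: "f k \<in> Gset T k" if "k<K" for k using someI_ex[OF ex[OF that]] f_def by simp
  have "inj_on f {..<K}"
  proof (rule inj_onI)
    fix k l assume "k \<in> {..<K}" "l \<in> {..<K}" "f k = f l"
    then show "k = l" using f[of k] f[of l] Gset_eq_comm[OF T] by auto
  qed
  moreover have "f ` {..<K} \<subseteq> {..<n}" using f Gset_eq_comm[OF T] by auto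
  ultimately show ?thesis using card_inj_on_le[of f "{..<K}" "{..<n}"] by simp
qed

lemma index_row_normalize:
  assumes "i<n" "j<K'"
  shows "row_normalize (mat n K' (\<lambda>(i,j). f i j)) $$ (i,j)
    = (if L2_set (\<lambda>j. f i j) {..<K'} = 0 then f i j else f i j / L2_set (\<lambda>j. f i j) {..<K'})"
proof -
  have "vnorm (row (mat n K' (\<lambda>(i,j). f i j)) i) = L2_set (\<lambda>j. f i j) {..<K'}"
    unfolding vnorm_eq_sqrt_sum L2_set_def using assms by simp
  then show ?thesis unfolding row_normalize_def using assms by simp
qed

lemma vnorm_phi_eq: assumes T: "memb_mat n K T" and th: "th \<in> carrier_vec n" and m: "m<K"
  shows "vnorm (phi T th m) = sqrt (\<Sum>i\<in>{i. i<n \<and> comm K T i = m}. (th $ i)\<^sup>2)"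
proof -
  have "vnorm (phi T th m) = sqrt (\<Sum>i<n. (if i \<in> Gset T m then th $ i else 0)\<^sup>2)"
    unfolding vnorm_eq_sqrt_sum phi_def using th by simp
  also have "(\<Sum>i<n. (if i \<in> Gset T m then th $ i else 0)\<^sup>2) = (\<Sum>i<n. if i \<in> Gset T m then (th $ i)\<^sup>2 else 0)"
    by (intro sum.cong refl) auto
  also have "\<dots> = (\<Sum>i\<in>{..<n} \<inter> Gset T m. (th $ i)\<^sup>2)" by (rule sum.inter_restrict[symmetric]) simp
  also have "{..<n} \<inter> Gset T m = {i. i<n \<and> comm K T i = m}" using Gset_eq_comm[OF T m] by auto
  finally show ?thesis .
qed

lemma index_theta_tilde: assumes "i < dim_vec th"
  shows "theta_tilde K T th $ i = th $ i / vnorm (phi T th (comm K T i))"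
  unfolding theta_tilde_def using assms by simp

lemma index_Bbar: assumes B: "B \<in> carrier_mat K K" and m: "m<K" and l: "l<K"
  shows "Bbar K T B th $$ (m,l) = vnorm (phi T th m) * B $$ (m,l) * vnorm (phi T th l)"
proof -
  define Om where "Om = Omega_mat K T th"
  have Omc: "Om \<in> carrier_mat K K" unfolding Om_def Omega_mat_def diagv_def by simp
  have Omi: "Om $$ (a,b) = (if a = b then vnorm (phi T th a) else 0)" if "a<K" "b<K" for a b
    unfolding Om_def Omega_mat_def diagv_def using that by simp
  have s1: "(Om * B) $$ (a,b) = vnorm (phi T th a) * B $$ (a,b)" if "a<K" "b<K" for a b
  proof -
    have "(Om * B) $$ (a,b) = (\<Sum>k<K. Om $$ (a,k) * B $$ (k,b))"
      using Omc B that by (subst index_mult_mat_sum) auto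
    also have "\<dots> = (\<Sum>k<K. (if a = k then 1 else 0) * (vnorm (phi T th a) * B $$ (k,b)))"
      using that by (intro sum.cong refl) (simp add: Omi)
    also have "\<dots> = vnorm (phi T th a) * B $$ (a,b)" using that by (simp add: delta_mult)
    finally show ?thesis .
  qed
  have "Bbar K T B th $$ (m,l) = (\<Sum>k<K. (Om * B) $$ (m,k) * Om $$ (k,l))"
    unfolding Bbar_def Om_def[symmetric] using Omc B m l by (subst index_mult_mat_sum) auto
  also have "\<dots> = (\<Sum>k<K. (if k = l then 1 else 0) * (vnorm (phi T th m) * B $$ (m,k) * vnorm (phi T th l)))"
    using m l by (intro sum.cong refl) (auto simp: s1 Omi)
  also have "\<dots> = vnorm (phi T th m) * B $$ (m,l) * vnorm (phi T th l)" using l by (simp add: delta_mult)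
  finally show ?thesis .
qed

lemma mult_cancel_left_inverse: fixes L R X :: "real mat"
  assumes "L \<in> carrier_mat p q" "R \<in> carrier_mat q p" "L * R = 1\<^sub>m p" "X \<in> carrier_mat p c"
  shows "L * (R * X) = X"
proof -
  have "L * (R * X) = (L * R) * X" using assoc_mult_mat[OF assms(1,2,4)] by simp
  then show ?thesis using assms(3,4) by simp
qed

lemma assoc_mult_mat3: fixes A B C X :: "real mat"
  assumes "A \<in> carrier_mat a b" "B \<in> carrier_mat b c" "C \<in> carrier_mat c d" "X \<in> carrier_mat d e"
  shows "A * B * C * X = A * (B * (C * X))"
proof -
  have AB: "A * B \<in> carrier_mat a c" using assms by simp
  have CX: "C * X \<in> carrier_mat c e" using assms by simp
  have "A * B * C * X = (A * B) * (C * X)" by (rule assoc_mult_mat[OF AB assms(3,4)])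
  also have "\<dots> = A * (B * (C * X))" by (rule assoc_mult_mat[OF assms(1,2) CX])
  finally show ?thesis .
qed

lemma diagonal_mat_inverse: fixes S :: "real mat"
  assumes S: "S \<in> carrier_mat r r" and dS: "diagonal_mat S" and nz: "\<And>i. i<r \<Longrightarrow> S $$ (i,i) \<noteq> 0"
  shows "S * mat r r (\<lambda>(i,j). if i = j then 1 / S $$ (i,i) else 0) = 1\<^sub>m r"
proof (rule eq_matI)
  fix i j assume "i < dim_row (1\<^sub>m r)" "j < dim_col (1\<^sub>m r)"
  then have ij: "i<r" "j<r" by auto
  have "(S * mat r r (\<lambda>(i,j). if i = j then 1 / S $$ (i,i) else 0)) $$ (i,j)
      = (\<Sum>k<r. S $$ (i,k) * (if k = j then 1 / S $$ (k,k) else 0))"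
    using S ij by (subst index_mult_mat_sum) auto
  also have "\<dots> = (\<Sum>k<r. (if k = j then 1 else 0) * (S $$ (i,k) / S $$ (k,k)))"
    by (intro sum.cong refl) auto
  also have "\<dots> = S $$ (i,j) / S $$ (j,j)" using ij by (simp only: delta_mult sum.delta finite_lessThan) simp
  also have "\<dots> = 1\<^sub>m r $$ (i,j)" using dS S ij nz[of j] unfolding diagonal_mat_def by auto
  finally show "(S * mat r r (\<lambda>(i,j). if i = j then 1 / S $$ (i,i) else 0)) $$ (i,j) = 1\<^sub>m r $$ (i,j)" .
qed (use S in auto)

lemma orthonormal_proj_absorb:
  fixes C H S D Di :: "real mat"
  assumes C: "C \<in> carrier_mat K r" and H: "H \<in> carrier_mat K r" and S: "S \<in> carrier_mat r r"
  and D: "D \<in> carrier_mat r r" and Di: "Di \<in> carrier_mat r r"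
  and CC: "C\<^sup>T * C = 1\<^sub>m r" and HH: "H\<^sup>T * H = 1\<^sub>m r" and DDi: "D * Di = 1\<^sub>m r"
  and eq: "C * S * C\<^sup>T = H * D * H\<^sup>T"
  shows "C * (C\<^sup>T * H) = H"
proof -
  have Ct: "C\<^sup>T \<in> carrier_mat r K" and Ht: "H\<^sup>T \<in> carrier_mat r K" and HDi: "H * Di \<in> carrier_mat K r"
    using C H Di by auto
  have "H = H * (D * (H\<^sup>T * (H * Di)))"
    using mult_cancel_left_inverse[OF Ht H HH Di] DDi H by simp
  also have "\<dots> = (H * D * H\<^sup>T) * (H * Di)" using assoc_mult_mat3[OF H D Ht HDi] by simp
  also have "\<dots> = C * (S * (C\<^sup>T * (H * Di)))" using assoc_mult_mat3[OF C S Ct HDi] eq by simp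
  finally have H_eq: "H = C * (S * (C\<^sup>T * (H * Di)))" .
  have "C\<^sup>T * (C * (S * (C\<^sup>T * (H * Di)))) = S * (C\<^sup>T * (H * Di))"
    by (rule mult_cancel_left_inverse[OF Ct C CC]) (use S Ct H Di in auto)
  then show ?thesis using H_eq by (metis (no_types))
qed

lemma orthonormal_proj_eq:
  fixes C H S D Si Di :: "real mat"
  assumes C: "C \<in> carrier_mat K r" and H: "H \<in> carrier_mat K r"
  and CC: "C\<^sup>T * C = 1\<^sub>m r" and HH: "H\<^sup>T * H = 1\<^sub>m r"
  and S: "S \<in> carrier_mat r r" and D: "D \<in> carrier_mat r r"
  and Si: "Si \<in> carrier_mat r r" and Di: "Di \<in> carrier_mat r r"
  and SSi: "S * Si = 1\<^sub>m r" and DDi: "D * Di = 1\<^sub>m r"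
  and eq: "C * S * C\<^sup>T = H * D * H\<^sup>T"
  shows "C * C\<^sup>T = H * H\<^sup>T"
proof -
  have Ct: "C\<^sup>T \<in> carrier_mat r K" and Ht: "H\<^sup>T \<in> carrier_mat r K" using C H by auto
  have CCH: "C * (C\<^sup>T * H) = H" by (rule orthonormal_proj_absorb[OF C H S D Di CC HH DDi eq])
  have HHC: "H * (H\<^sup>T * C) = C" by (rule orthonormal_proj_absorb[OF H C D S Si HH CC SSi eq[symmetric]])
  have CCt: "C * C\<^sup>T \<in> carrier_mat K K" and HHt: "H * H\<^sup>T \<in> carrier_mat K K"
    and HtC: "H\<^sup>T * C \<in> carrier_mat r r" and CtH: "C\<^sup>T * H \<in> carrier_mat r r" using C H by auto
  have A: "C * C\<^sup>T = H * H\<^sup>T * (C * C\<^sup>T)"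
  proof -
    have "H * H\<^sup>T * (C * C\<^sup>T) = H * (H\<^sup>T * (C * C\<^sup>T))" by (rule assoc_mult_mat[OF H Ht CCt])
    also have "\<dots> = H * (H\<^sup>T * C * C\<^sup>T)" using assoc_mult_mat[OF Ht C Ct] by simp
    also have "\<dots> = (H * (H\<^sup>T * C)) * C\<^sup>T" by (rule assoc_mult_mat[symmetric, OF H HtC Ct])
    finally have "H * H\<^sup>T * (C * C\<^sup>T) = (H * (H\<^sup>T * C)) * C\<^sup>T" .
    then show ?thesis using HHC by simp
  qed
  have B: "H * H\<^sup>T = C * C\<^sup>T * (H * H\<^sup>T)"
  proof -
    have "C * C\<^sup>T * (H * H\<^sup>T) = C * (C\<^sup>T * (H * H\<^sup>T))" by (rule assoc_mult_mat[OF C Ct HHt])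
    also have "\<dots> = C * (C\<^sup>T * H * H\<^sup>T)" using assoc_mult_mat[OF Ct H Ht] by simp
    also have "\<dots> = (C * (C\<^sup>T * H)) * H\<^sup>T" by (rule assoc_mult_mat[symmetric, OF C CtH Ht])
    finally have "C * C\<^sup>T * (H * H\<^sup>T) = (C * (C\<^sup>T * H)) * H\<^sup>T" .
    then show ?thesis using CCH by simp
  qed
  have "(H * H\<^sup>T)\<^sup>T = (C * C\<^sup>T * (H * H\<^sup>T))\<^sup>T" using B by simp
  also have "(C * C\<^sup>T * (H * H\<^sup>T))\<^sup>T = (H * H\<^sup>T)\<^sup>T * (C * C\<^sup>T)\<^sup>T"
    by (rule transpose_mult) (use C H in auto)
  also have "(H * H\<^sup>T)\<^sup>T = H * H\<^sup>T" using transpose_mult[OF H Ht] by simp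
  also have "(C * C\<^sup>T)\<^sup>T = C * C\<^sup>T" using transpose_mult[OF C Ct] by simp
  finally have "H * H\<^sup>T = H * H\<^sup>T * (C * C\<^sup>T)" .
  then show ?thesis using A by simp
qed

lemma cosv_ge_minus_one: assumes "dim_vec a = dim_vec b" shows "-1 \<le> cosv a b"
proof (cases "vnorm a * vnorm b = 0")
  case False
  have "- (vnorm a * vnorm b) \<le> a \<bullet> b"
    using neg_norms_le_sum_product[of "\<lambda>i. a $ i" "dim_vec b" "\<lambda>i. b $ i"] assms
    by (simp add: vnorm_eq_sqrt_sum scalar_prod_def lessThan_atLeast0)
  moreover have "0 \<le> vnorm a * vnorm b" by (simp add: vnorm_eq_sqrt_sum sum_nonneg)
  then have "0 < vnorm a * vnorm b" using False by linarith
  ultimately show ?thesis unfolding cosv_def by (simp add: le_divide_eq)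
qed (auto simp: cosv_def)

lemma cosv_row_eq:
  assumes "C \<in> carrier_mat K r" "m<K" "l<K"
  shows "cosv (row C m) (row C l) = (\<Sum>k<r. C $$ (m,k) * C $$ (l,k))
    / (sqrt (\<Sum>k<r. (C $$ (m,k))\<^sup>2) * sqrt (\<Sum>k<r. (C $$ (l,k))\<^sup>2))"
  using assms unfolding cosv_def vnorm_eq_sqrt_sum
  by (simp add: scalar_prod_def lessThan_atLeast0 power2_eq_square)

lemma (in spherical_clustering) unit_row_dist_eq_cosv:
  assumes C: "C \<in> carrier_mat K K'" and C_eq: "\<And>m k. m<K \<Longrightarrow> k<K' \<Longrightarrow> C $$ (m,k) = c m k"
  and "m<K" "l<K"
  shows "(\<Sum>k<K'. (unit_row m k - unit_row l k)\<^sup>2) = 2 - 2 * cosv (row C m) (row C l)"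
  using cosv_row_eq[OF C assms(3,4)] assms(3,4) by (simp add: unit_row_dist_power2 row_norm_def C_eq)

section \<open>Misclustered nodes and the loss\<close>

lemma perm_mat_of_in_perm_mats: "\<sigma> permutes {..<K} \<Longrightarrow> perm_mat_of K \<sigma> \<in> perm_mats K"
  unfolding perm_mats_def by simp

lemma index_memb_mat: "memb_mat n K T \<Longrightarrow> i<n \<Longrightarrow> k<K \<Longrightarrow> T $$ (i,k) = (if comm K T i = k then 1 else 0)"
  using memb_mat_row(2) by fastforce

lemma index_memb_mult_perm_mat:
  assumes Tt: "memb_mat n K Tt" and "i<n" "j<K"
  shows "(Tt * perm_mat_of K \<sigma>) $$ (i,j) = (if \<sigma> (comm K Tt i) = j then 1 else 0)"
  using memb_mat_mult_index[OF Tt _ assms(2,3), of "perm_mat_of K \<sigma>"] memb_mat_row(1)[OF Tt assms(2)] assms(3)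
  by (simp add: perm_mat_of_def)

context
  fixes n K :: nat and T Tt :: "real mat" and S :: "nat set" and \<sigma> :: "nat \<Rightarrow> nat"
  assumes T: "memb_mat n K T" and Tt: "memb_mat n K Tt" and S: "S \<subseteq> {..<n}"
  and agree: "\<And>i. i<n \<Longrightarrow> i \<notin> S \<Longrightarrow> \<sigma> (comm K Tt i) = comm K T i"
begin

lemma index_relabeling_error:
  assumes "i<n" "j<K"
  shows "(Tt * perm_mat_of K \<sigma> - T) $$ (i,j)
    = (if i \<in> S then (if \<sigma> (comm K Tt i) = j then 1 else 0) - (if comm K T i = j then 1 else 0) else 0)"
proof -
  have "(Tt * perm_mat_of K \<sigma> - T) $$ (i,j) = (Tt * perm_mat_of K \<sigma>) $$ (i,j) - T $$ (i,j)"
    using assms memb_mat_carrier[OF T] memb_mat_carrier[OF Tt]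
    by (simp add: perm_mat_of_def del: index_mult_mat)
  then show ?thesis
    using assms agree[OF assms(1)] by (simp add: index_memb_mult_perm_mat[OF Tt] index_memb_mat[OF T])
qed

lemma rows_agree_off_misclustered:
  assumes "i<n" "i \<notin> S" shows "row (Tt * perm_mat_of K \<sigma>) i = row T i"
proof (rule eq_vecI)
  show "dim_vec (row (Tt * perm_mat_of K \<sigma>) i) = dim_vec (row T i)"
    using memb_mat_carrier[OF T] by (simp add: perm_mat_of_def)
  fix j assume "j < dim_vec (row T i)"
  then have j: "j<K" using memb_mat_carrier[OF T] by simp
  then have "(Tt * perm_mat_of K \<sigma> - T) $$ (i,j) = 0" using assms by (simp add: index_relabeling_error)
  moreover have "row (Tt * perm_mat_of K \<sigma>) i $ j = (Tt * perm_mat_of K \<sigma>) $$ (i,j)"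
    using assms j memb_mat_carrier[OF Tt] by (intro index_row(1)) (auto simp: perm_mat_of_def)
  moreover have "row T i $ j = T $$ (i,j)"
    using assms j memb_mat_carrier[OF T] by (intro index_row(1)) auto
  ultimately show "row (Tt * perm_mat_of K \<sigma>) i $ j = row T i $ j"
    using assms j memb_mat_carrier[OF T] memb_mat_carrier[OF Tt]
    by (simp add: perm_mat_of_def del: index_mult_mat)
qed

lemma l0_rows_relabeling_error_le:
  "l0_rows (Tt * perm_mat_of K \<sigma> - T) (Gset T k) \<le> 2 * card (S \<inter> Gset T k)"
proof -
  define M where "M = Tt * perm_mat_of K \<sigma> - T"
  have dimM: "dim_row M = n" "dim_col M = K"
    using memb_mat_carrier[OF T] memb_mat_carrier[OF Tt] by (auto simp: M_def perm_mat_of_def)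
  have fin: "finite (S \<inter> Gset T k)" using S by (auto intro: finite_subset)
  have "{(i,j). i \<in> Gset T k \<and> i < dim_row M \<and> j < dim_col M \<and> M $$ (i,j) \<noteq> 0}
      \<subseteq> (\<lambda>i. (i, \<sigma> (comm K Tt i))) ` (S \<inter> Gset T k) \<union> (\<lambda>i. (i, comm K T i)) ` (S \<inter> Gset T k)"
  proof
    fix p assume "p \<in> {(i,j). i \<in> Gset T k \<and> i < dim_row M \<and> j < dim_col M \<and> M $$ (i,j) \<noteq> 0}"
    then obtain i j where ij: "p = (i,j)" "i \<in> Gset T k" "i < dim_row M" "j < dim_col M" "M $$ (i,j) \<noteq> 0"
      by blast
    then have "i \<in> S" "j = \<sigma> (comm K Tt i) \<or> j = comm K T i"
      using index_relabeling_error[of i j] dimM by (auto simp: M_def split: if_splits)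
    then show "p \<in> (\<lambda>i. (i, \<sigma> (comm K Tt i))) ` (S \<inter> Gset T k) \<union> (\<lambda>i. (i, comm K T i)) ` (S \<inter> Gset T k)"
      using ij by auto
  qed
  then have "l0_rows M (Gset T k)
      \<le> card ((\<lambda>i. (i, \<sigma> (comm K Tt i))) ` (S \<inter> Gset T k) \<union> (\<lambda>i. (i, comm K T i)) ` (S \<inter> Gset T k))"
    unfolding l0_rows_def using fin by (intro card_mono) auto
  also have "\<dots> \<le> card (S \<inter> Gset T k) + card (S \<inter> Gset T k)"
    by (intro order_trans[OF card_Un_le] add_mono card_image_le fin)
  finally show ?thesis unfolding M_def by simp
qed

lemma L1_loss_le_misclustered:
  assumes nonempty: "\<And>k. k<K \<Longrightarrow> 1 \<le> card (Gset T k)" and \<sigma>: "\<sigma> permutes {..<K}"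
  shows "L1_loss K Tt T \<le> (\<Sum>k<K. real (card (S \<inter> Gset T k)) / real (card (Gset T k)))"
proof -
  have "finite (perm_mats K)" unfolding perm_mats_def by (intro finite_imageI finite_permutations) simp
  then have "L1_loss K Tt T
      \<le> (\<Sum>k<K. real (l0_rows (Tt * perm_mat_of K \<sigma> - T) (Gset T k)) / (2 * real (card (Gset T k))))"
    unfolding L1_loss_def using perm_mat_of_in_perm_mats[OF \<sigma>] by (intro Min_le) auto
  also have "\<dots> \<le> (\<Sum>k<K. real (card (S \<inter> Gset T k)) / real (card (Gset T k)))"
  proof (rule sum_mono)
    fix k assume "k \<in> {..<K}"
    then have "0 < real (card (Gset T k))" using nonempty by fastforce
    then show "real (l0_rows (Tt * perm_mat_of K \<sigma> - T) (Gset T k)) / (2 * real (card (Gset T k)))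
        \<le> real (card (S \<inter> Gset T k)) / real (card (Gset T k))"
      using l0_rows_relabeling_error_le[of k] by (simp add: field_simps)
  qed
  finally show ?thesis .
qed

end

lemma min_nk_le: "k<K \<Longrightarrow> min_nk K T \<le> real (card (Gset T k))"
  unfolding min_nk_def by (intro of_nat_mono Min_le) auto

lemma min_nk_pos:
  assumes "1 \<le> K" and "\<And>k. k<K \<Longrightarrow> 1 \<le> card (Gset T k)" shows "0 < min_nk K T"
proof -
  have "Min ((\<lambda>k. card (Gset T k)) ` {..<K}) \<in> (\<lambda>k. card (Gset T k)) ` {..<K}"
    by (rule Min_in) (use assms(1) in \<open>auto simp: lessThan_empty_iff\<close>)
  then show ?thesis unfolding min_nk_def using assms(2) by fastforce
qed

lemma sum_misclustered_fraction_le: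
  assumes T: "memb_mat n K T" and S: "S \<subseteq> {..<n}"
  and K: "1 \<le> K" and nonempty: "\<And>k. k<K \<Longrightarrow> 1 \<le> card (Gset T k)"
  shows "(\<Sum>k<K. real (card (S \<inter> Gset T k)) / real (card (Gset T k))) \<le> real (card S) / min_nk K T"
proof -
  have mn: "0 < min_nk K T" by (rule min_nk_pos[OF K nonempty])
  have "(\<Sum>k<K. real (card (S \<inter> Gset T k)) / real (card (Gset T k)))
      \<le> (\<Sum>k<K. real (card (S \<inter> Gset T k)) / min_nk K T)"
  proof (intro sum_mono divide_left_mono)
    fix k assume "k \<in> {..<K}"
    then show "min_nk K T \<le> real (card (Gset T k))" by (simp add: min_nk_le)
    then show "0 < real (card (Gset T k)) * min_nk K T" using mn by simp
  qed simp
  also have "\<dots> = real (card S) / min_nk K T"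
  proof -
    have "(\<Sum>k<K. card (S \<inter> Gset T k)) = card (\<Union>k<K. S \<inter> Gset T k)"
      by (subst card_UN_disjoint) (use S Gset_eq_comm[OF T] in \<open>auto intro: finite_subset\<close>)
    also have "(\<Union>k<K. S \<inter> Gset T k) = S"
      using S memb_mat_row(1)[OF T] Gset_eq_comm[OF T] by auto
    finally show ?thesis by (simp add: sum_divide_distrib[symmetric] flip: of_nat_sum)
  qed
  finally show ?thesis .
qed

lemma recovery_of_relabeling:
  assumes T: "memb_mat n K T" and Tt: "memb_mat n K Tt"
  and S: "S \<subseteq> {..<n}" and \<sigma>: "\<sigma> permutes {..<K}"
  and agree: "\<And>i. i<n \<Longrightarrow> i \<notin> S \<Longrightarrow> \<sigma> (comm K Tt i) = comm K T i"
  and nonempty: "\<And>k. k<K \<Longrightarrow> 1 \<le> card (Gset T k)" and K: "1 \<le> K"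
  and card: "real (card S) \<le> b"
  shows "recovery K T Tt (b / min_nk K T)"
  unfolding recovery_def
proof (intro exI[of _ "\<lambda>k. S \<inter> Gset T k"] conjI bexI ballI allI impI)
  show "L1_loss K Tt T \<le> (\<Sum>k<K. real (card (S \<inter> Gset T k)) / real (card (Gset T k)))"
    by (rule L1_loss_le_misclustered[OF T Tt S agree nonempty \<sigma>])
  show "(\<Sum>k<K. real (card (S \<inter> Gset T k)) / real (card (Gset T k))) \<le> b / min_nk K T"
  proof -
    have "real (card S) / min_nk K T \<le> b / min_nk K T"
      using card min_nk_pos[OF K nonempty] by (simp add: divide_right_mono)
    with sum_misclustered_fraction_le[OF T S K nonempty] show ?thesis by linarith
  qed
  show "row (Tt * perm_mat_of K \<sigma>) i = row T i" if "i \<in> (\<Union>k<K. Gset T k - S \<inter> Gset T k)" for i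
    using that Gset_memb_mat[OF T] by (intro rows_agree_off_misclustered[OF T Tt S agree]) auto
qed (auto simp: perm_mat_of_in_perm_mats[OF \<sigma>])

lemma recovery_mono: "recovery K T Tt b \<Longrightarrow> b \<le> b' \<Longrightarrow> recovery K T Tt b'"
  unfolding recovery_def by (meson order_trans)

section \<open>Eigenstructure of the DC-SBM\<close>

lemma dcsbmD:
  assumes "dcsbm n K K' T B th"
  shows "1 \<le> K" "memb_mat n K T" "\<And>k. k<K \<Longrightarrow> 1 \<le> card (Gset T k)" "B \<in> carrier_mat K K"
    "th \<in> carrier_vec n" "\<And>i. i<n \<Longrightarrow> 0 < th $ i" "K' \<le> K" "K \<le> n"
proof -
  show "1 \<le> K" "memb_mat n K T" "\<And>k. k<K \<Longrightarrow> 1 \<le> card (Gset T k)" "B \<in> carrier_mat K K"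
    "th \<in> carrier_vec n" "\<And>i. i<n \<Longrightarrow> 0 < th $ i" "K' \<le> K"
    using assms unfolding dcsbm_def by auto
  then show "K \<le> n" using communities_le_nodes by blast
qed

lemma gamma_n_le: "k<K' \<Longrightarrow> gamma_n K' Sig \<le> \<bar>Sig $$ (k,k)\<bar>"
  unfolding gamma_n_def by (intro Min_le) auto

lemma gamma_n_pos:
  assumes "1 \<le> K'" "\<And>k. k<K' \<Longrightarrow> Sig $$ (k,k) \<noteq> 0" shows "0 < gamma_n K' Sig"
proof -
  have "gamma_n K' Sig \<in> (\<lambda>i. \<bar>Sig $$ (i,i)\<bar>) ` {..<K'}"
    unfolding gamma_n_def by (rule Min_in) (use assms(1) in \<open>auto simp: lessThan_empty_iff\<close>)
  then show ?thesis using assms(2) by auto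
qed

lemma dcsbm_eigen_of_model:
  assumes dc: "dcsbm n K K' T B th" and ed: "eig_decomp n K' (Pmat T B th) U Sig"
  shows "dcsbm_eigen n K' (\<lambda>i k. U $$ (i,k)) (\<lambda>k. Sig $$ (k,k)) (\<lambda>i i'. Pmat T B th $$ (i,i'))
    K (comm K T) (\<lambda>i. th $ i) (\<lambda>m l. B $$ (m,l))"
proof (unfold_locales)
  have Uc: "U \<in> carrier_mat n K'" and UU: "U\<^sup>T * U = 1\<^sub>m K'" using ed unfolding eig_decomp_def by auto
  show "\<And>k l. k<K' \<Longrightarrow> l<K' \<Longrightarrow> (\<Sum>i<n. U $$ (i,k) * U $$ (i,l)) = (if k = l then 1 else 0)"
    by (rule orthonormal_cols_sum[OF Uc UU])
  show "\<And>i i'. i<n \<Longrightarrow> i'<n \<Longrightarrow> Pmat T B th $$ (i,i') = (\<Sum>k<K'. U $$ (i,k) * Sig $$ (k,k) * U $$ (i',k))"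
    by (rule eig_decomp_index[OF ed])
  show "\<And>k. k<K' \<Longrightarrow> Sig $$ (k,k) \<noteq> 0" using ed unfolding eig_decomp_def by auto
  show "\<And>i. i<n \<Longrightarrow> comm K T i < K" by (rule memb_mat_row(1)[OF dcsbmD(2)[OF dc]])
  show "\<And>i. i<n \<Longrightarrow> 0 < th $ i" by (rule dcsbmD(6)[OF dc])
  show "\<exists>i<n. comm K T i = m" if "m<K" for m
  proof -
    have "Gset T m \<noteq> {}" using dcsbmD(3)[OF dc that] by auto
    then show ?thesis using Gset_eq_comm[OF dcsbmD(2)[OF dc] that] by auto
  qed
  show "\<And>i i'. i<n \<Longrightarrow> i'<n \<Longrightarrow> Pmat T B th $$ (i,i') = th $ i * th $ i' * B $$ (comm K T i, comm K T i')"
    by (rule index_Pmat[OF dcsbmD(2,4,5)[OF dc]])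
qed

lemma eigen_perturbation_of_top_eigvecs:
  assumes dc: "dcsbm n K K' T B th" and ed: "eig_decomp n K' (Pmat T B th) U Sig"
  and top: "top_eigvecs n K' At Uh" and K': "1 \<le> K'"
  obtains V lam where
    "eigen_perturbation n K' (\<lambda>i k. U $$ (i,k)) (\<lambda>k. Sig $$ (k,k)) (\<lambda>i i'. Pmat T B th $$ (i,i'))
       (\<lambda>i j. V $$ (i,j)) lam (\<lambda>i i'. At $$ (i,i')) (spec_norm (At - Pmat T B th)) (gamma_n K' Sig)"
    "Uh = mat n K' (\<lambda>(i,j). V $$ (i,j))"
proof -
  interpret M: dcsbm_eigen n K' "\<lambda>i k. U $$ (i,k)" "\<lambda>k. Sig $$ (k,k)" "\<lambda>i i'. Pmat T B th $$ (i,i')"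
    K "comm K T" "\<lambda>i. th $ i" "\<lambda>m l. B $$ (m,l)"
    by (rule dcsbm_eigen_of_model[OF dc ed])
  obtain V lam where V: "V \<in> carrier_mat n n" "V\<^sup>T * V = 1\<^sub>m n"
    and At_eq: "\<And>i i'. i<n \<Longrightarrow> i'<n \<Longrightarrow> At $$ (i,i') = (\<Sum>j<n. V $$ (i,j) * lam j * V $$ (i',j))"
    and sorted: "\<And>i j. i \<le> j \<Longrightarrow> j < n \<Longrightarrow> \<bar>lam j\<bar> \<le> \<bar>lam i\<bar>"
    and Uh: "Uh = mat n K' (\<lambda>(i,j). V $$ (i,j))" and At: "At \<in> carrier_mat n n"
    using top_eigvecsE[OF top] by blast
  have AP: "At - Pmat T B th \<in> carrier_mat n n"
    using Pmat_carrier[OF dcsbmD(2,4,5)[OF dc]] by (rule minus_carrier_mat)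
  have "eigen_perturbation n K' (\<lambda>i k. U $$ (i,k)) (\<lambda>k. Sig $$ (k,k)) (\<lambda>i i'. Pmat T B th $$ (i,i'))
       (\<lambda>i j. V $$ (i,j)) lam (\<lambda>i i'. At $$ (i,i')) (spec_norm (At - Pmat T B th)) (gamma_n K' Sig)"
  proof unfold_locales
    show "K' \<le> n" using dcsbmD(7,8)[OF dc] by simp
    show "\<And>j j'. j<n \<Longrightarrow> j'<n \<Longrightarrow> (\<Sum>i<n. V $$ (i,j) * V $$ (i,j')) = (if j = j' then 1 else 0)"
      by (rule orthonormal_cols_sum[OF V])
    show "\<And>i i'. i<n \<Longrightarrow> i'<n \<Longrightarrow> (\<Sum>j<n. V $$ (i,j) * V $$ (i',j)) = (if i = i' then 1 else 0)"
      by (rule orthonormal_square_rows_sum[OF V])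
    show "\<And>k. k<K' \<Longrightarrow> gamma_n K' Sig \<le> \<bar>Sig $$ (k,k)\<bar>" by (rule gamma_n_le)
    show "0 < gamma_n K' Sig" by (rule gamma_n_pos[OF K' M.s_nonzero])
    show "(\<Sum>i<n. (\<Sum>i'<n. (At $$ (i,i') - Pmat T B th $$ (i,i')) * x i')\<^sup>2)
        \<le> (spec_norm (At - Pmat T B th))\<^sup>2 * (\<Sum>i<n. (x i)\<^sup>2)" for x
    proof -
      have "(\<Sum>i<n. (\<Sum>i'<n. (At $$ (i,i') - Pmat T B th $$ (i,i')) * x i')\<^sup>2)
          = (\<Sum>i<n. (\<Sum>i'<n. (At - Pmat T B th) $$ (i,i') * x i')\<^sup>2)"
        using At Pmat_carrier[OF dcsbmD(2,4,5)[OF dc]] by (intro sum.cong refl) auto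
      then show ?thesis using sum_mult_power2_le_spec_norm[OF AP, of x] by simp
    qed
    show "0 \<le> spec_norm (At - Pmat T B th)" by (rule spec_norm_nonneg[OF AP])
  qed (use sorted At_eq in auto)
  with Uh that show ?thesis by blast
qed

lemma kmeans_sol_le_blockwise:
  assumes T: "memb_mat n K T" and km: "kmeans_sol n K d Y Tt Xm" and Y: "Y \<in> carrier_mat n d"
  and y: "\<And>i j. i<n \<Longrightarrow> j<d \<Longrightarrow> Y $$ (i,j) = y i j"
  shows "(\<Sum>i<n. \<Sum>j<d. (Xm $$ (comm K Tt i, j) - y i j)\<^sup>2)
    \<le> (\<Sum>i<n. \<Sum>j<d. (Zf (comm K T i) j - y i j)\<^sup>2)"
proof -
  define Zm where "Zm = mat K d (\<lambda>(m,j). Zf m j)"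
  have Tt: "memb_mat n K Tt" and Xm: "Xm \<in> carrier_mat K d" and Zm: "Zm \<in> carrier_mat K d"
    using km unfolding kmeans_sol_def Zm_def by auto
  have "(\<Sum>i<n. \<Sum>j<d. (Xm $$ (comm K Tt i, j) - y i j)\<^sup>2) = frob_sq (Tt * Xm - Y)"
    unfolding frob_sq_memb_mult[OF Tt Xm Y] by (intro sum.cong refl) (simp add: y)
  also have "\<dots> \<le> frob_sq (T * Zm - Y)" using km T Zm unfolding kmeans_sol_def by blast
  also have "\<dots> = (\<Sum>i<n. \<Sum>j<d. (Zf (comm K T i) j - y i j)\<^sup>2)"
    unfolding frob_sq_memb_mult[OF T Zm Y] using memb_mat_row(1)[OF T]
    by (intro sum.cong refl) (simp add: Zm_def y)
  finally show ?thesis .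
qed

lemma rssc_outputE:
  assumes dc: "dcsbm n K K' T B th" and ed: "eig_decomp n K' (Pmat T B th) U Sig"
  and rs: "rssc_output n K K' At Tt" and K': "1 \<le> K'"
  obtains V lam Xm where
    "eigen_perturbation n K' (\<lambda>i k. U $$ (i,k)) (\<lambda>k. Sig $$ (k,k)) (\<lambda>i i'. Pmat T B th $$ (i,i'))
       (\<lambda>i j. V $$ (i,j)) lam (\<lambda>i i'. At $$ (i,i')) (spec_norm (At - Pmat T B th)) (gamma_n K' Sig)"
    "kmeans_sol n K K' (row_normalize (mat n K' (\<lambda>(i,j). V $$ (i,j)))) Tt Xm"
proof -
  obtain Uh Xm where top: "top_eigvecs n K' At Uh" and km: "kmeans_sol n K K' (row_normalize Uh) Tt Xm"
    using rs unfolding rssc_output_def by blast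
  obtain V lam where "eigen_perturbation n K' (\<lambda>i k. U $$ (i,k)) (\<lambda>k. Sig $$ (k,k))
      (\<lambda>i i'. Pmat T B th $$ (i,i')) (\<lambda>i j. V $$ (i,j)) lam (\<lambda>i i'. At $$ (i,i'))
      (spec_norm (At - Pmat T B th)) (gamma_n K' Sig)" and "Uh = mat n K' (\<lambda>(i,j). V $$ (i,j))"
    by (rule eigen_perturbation_of_top_eigvecs[OF dc ed top K'])
  with km show ?thesis by (intro that) simp_all
qed

lemma (in eigen_perturbation) kmeans_sol_le_normalized_rows:
  assumes T: "memb_mat n K T" and km: "kmeans_sol n K K' (row_normalize (mat n K' (\<lambda>(i,j). V i j))) Tt Xm"
  shows "(\<Sum>i<n. \<Sum>j<K'. (Xm $$ (comm K Tt i, j) - normalized_row i j)\<^sup>2)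
    \<le> (\<Sum>i<n. \<Sum>j<K'. (Z (comm K T i) j - normalized_row i j)\<^sup>2)"
proof (rule kmeans_sol_le_blockwise[OF T km])
  show "row_normalize (mat n K' (\<lambda>(i,j). V i j)) \<in> carrier_mat n K'" by (simp add: row_normalize_def)
  show "row_normalize (mat n K' (\<lambda>(i,j). V i j)) $$ (i,j) = normalized_row i j" if "i<n" "j<K'" for i j
    unfolding normalized_row_def by (rule index_row_normalize[OF that])
qed

lemma min_tt_sq_le: "i<n \<Longrightarrow> min_tt_sq n K T th \<le> (theta_tilde K T th $ i)\<^sup>2"
  unfolding min_tt_sq_def by (intro Min_le) auto

definition block_coeffs :: "nat \<Rightarrow> real mat \<Rightarrow> real vec \<Rightarrow> real mat \<Rightarrow> real mat" where
  "block_coeffs K T th U = mat K (dim_col U) (\<lambda>(m,k). \<Sum>i\<in>Gset T m. theta_tilde K T th $ i * U $$ (i,k))"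

context
  fixes n K K' :: nat and T B U Sig :: "real mat" and th :: "real vec"
  assumes dc: "dcsbm n K K' T B th" and ed: "eig_decomp n K' (Pmat T B th) U Sig"
begin

interpretation M: dcsbm_eigen n K' "\<lambda>i k. U $$ (i,k)" "\<lambda>k. Sig $$ (k,k)" "\<lambda>i i'. Pmat T B th $$ (i,i')"
  K "comm K T" "\<lambda>i. th $ i" "\<lambda>m l. B $$ (m,l)"
  by (rule dcsbm_eigen_of_model[OF dc ed])

lemma block_norm_eq_vnorm_phi: "m<K \<Longrightarrow> M.block_norm m = vnorm (phi T th m)"
  unfolding M.block_norm_def M.block_def by (simp add: vnorm_phi_eq[OF dcsbmD(2,5)[OF dc]])

lemma tt_eq_theta_tilde: "i<n \<Longrightarrow> M.tt i = theta_tilde K T th $ i"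
  using dcsbmD(5)[OF dc] memb_mat_row(1)[OF dcsbmD(2)[OF dc]]
  by (simp add: M.tt_def index_theta_tilde block_norm_eq_vnorm_phi)

lemma theta_tilde_pos: "i<n \<Longrightarrow> 0 < theta_tilde K T th $ i"
  using M.tt_pos by (simp add: tt_eq_theta_tilde)

lemma theta_tilde_block_power2_sum: "k<K \<Longrightarrow> (\<Sum>i\<in>Gset T k. (theta_tilde K T th $ i)\<^sup>2) = 1"
  using M.tt_block_norm Gset_eq_comm[OF dcsbmD(2)[OF dc]] by (simp add: tt_eq_theta_tilde)

lemma block_coeffs_carrier: "block_coeffs K T th U \<in> carrier_mat K K'"
  using ed unfolding block_coeffs_def eig_decomp_def by auto

lemma index_block_coeffs: assumes "m<K" "k<K'" shows "block_coeffs K T th U $$ (m,k) = M.c m k"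
proof -
  have "dim_col U = K'" using ed unfolding eig_decomp_def by auto
  then have "block_coeffs K T th U $$ (m,k) = (\<Sum>i\<in>M.block m. theta_tilde K T th $ i * U $$ (i,k))"
    using assms Gset_eq_comm[OF dcsbmD(2)[OF dc]] by (simp add: block_coeffs_def M.block_def)
  also have "\<dots> = M.c m k"
    using assms by (simp add: M.c_eq_block_sum M.block_def tt_eq_theta_tilde)
  finally show ?thesis .
qed

lemma block_coeffs_orthonormal_cols: "(block_coeffs K T th U)\<^sup>T * block_coeffs K T th U = 1\<^sub>m K'"
proof (rule eq_matI)
  fix k l assume "k < dim_row (1\<^sub>m K')" "l < dim_col (1\<^sub>m K')"
  then have kl: "k<K'" "l<K'" by auto
  have "((block_coeffs K T th U)\<^sup>T * block_coeffs K T th U) $$ (k,l)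
      = (\<Sum>m<K. (block_coeffs K T th U)\<^sup>T $$ (k,m) * block_coeffs K T th U $$ (m,l))"
    using block_coeffs_carrier kl by (subst index_mult_mat_sum) auto
  then show "((block_coeffs K T th U)\<^sup>T * block_coeffs K T th U) $$ (k,l) = 1\<^sub>m K' $$ (k,l)"
    using block_coeffs_carrier M.block_coeffs_orthonormal[OF kl] kl by (simp add: index_block_coeffs)
qed (use block_coeffs_carrier in auto)

lemma block_coeffs_row_power2_le1: "m<K \<Longrightarrow> (\<Sum>k<K'. (block_coeffs K T th U $$ (m,k))\<^sup>2) \<le> 1"
  using M.block_row_norm_le1 by (simp add: index_block_coeffs)

lemma Bbar_eq_block_coeffs: "Bbar K T B th = block_coeffs K T th U * Sig * (block_coeffs K T th U)\<^sup>T"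
proof (rule eq_matI)
  have Sig: "Sig \<in> carrier_mat K' K'" "diagonal_mat Sig" using ed unfolding eig_decomp_def by auto
  fix m l assume "m < dim_row (block_coeffs K T th U * Sig * (block_coeffs K T th U)\<^sup>T)"
    "l < dim_col (block_coeffs K T th U * Sig * (block_coeffs K T th U)\<^sup>T)"
  then have ml: "m<K" "l<K" using block_coeffs_carrier by auto
  show "Bbar K T B th $$ (m,l) = (block_coeffs K T th U * Sig * (block_coeffs K T th U)\<^sup>T) $$ (m,l)"
    using index_mult_diagonal_transpose[OF block_coeffs_carrier Sig ml] M.block_coeffs_factorize_Bf[OF ml]
      index_Bbar[OF dcsbmD(4)[OF dc] ml]
    by (simp add: index_block_coeffs block_norm_eq_vnorm_phi ml)
qed (use block_coeffs_carrier in \<open>auto simp: Bbar_def Omega_mat_def diagv_def\<close>)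

lemma min_tt_sq_pos: "0 < min_tt_sq n K T th"
proof -
  have "1 \<le> n" using dcsbmD(1,8)[OF dc] by simp
  then have "min_tt_sq n K T th \<in> (\<lambda>i. (theta_tilde K T th $ i)\<^sup>2) ` {..<n}"
    unfolding min_tt_sq_def by (intro Min_in) (auto simp: lessThan_empty_iff)
  then obtain i where "i<n" "min_tt_sq n K T th = (theta_tilde K T th $ i)\<^sup>2" by blast
  then show ?thesis using theta_tilde_pos[of i] by simp
qed

lemma min_tt_sq_mult_min_nk_le1: "min_tt_sq n K T th * min_nk K T \<le> 1"
proof -
  have K: "0 < K" using dcsbmD(1)[OF dc] by simp
  have "min_tt_sq n K T th * min_nk K T \<le> min_tt_sq n K T th * real (card (Gset T 0))"
    using min_nk_le[OF K] min_tt_sq_pos by (intro mult_left_mono) auto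
  also have "\<dots> = (\<Sum>i\<in>Gset T 0. min_tt_sq n K T th)" by simp
  also have "\<dots> \<le> (\<Sum>i\<in>Gset T 0. (theta_tilde K T th $ i)\<^sup>2)"
    using Gset_memb_mat[OF dcsbmD(2)[OF dc]] by (intro sum_mono min_tt_sq_le) auto
  also have "\<dots> = 1" by (rule theta_tilde_block_power2_sum[OF K])
  finally show ?thesis .
qed

lemma Bbar_diag_eq: "m<K \<Longrightarrow> Bbar K T B th $$ (m,m) = (\<Sum>k<K'. (block_coeffs K T th U $$ (m,k))\<^sup>2 * Sig $$ (k,k))"
  using ed index_mult_diagonal_transpose[OF block_coeffs_carrier, of Sig m m]
  by (simp add: Bbar_eq_block_coeffs eig_decomp_def power2_eq_square mult_ac)

lemma Bbar_diag_pos: assumes "m<K" "0 < B $$ (m,m)" shows "0 < Bbar K T B th $$ (m,m)"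
  using assms M.block_norm_pos[OF assms(1)]
  by (simp add: index_Bbar[OF dcsbmD(4)[OF dc]] block_norm_eq_vnorm_phi)

lemma Bbar_diag_le:
  assumes "\<forall>i<K'. Sig $$ (i,i) < iota" "m<K"
  shows "Bbar K T B th $$ (m,m) \<le> iota * (\<Sum>k<K'. (block_coeffs K T th U $$ (m,k))\<^sup>2)"
proof -
  have "(\<Sum>k<K'. (block_coeffs K T th U $$ (m,k))\<^sup>2 * Sig $$ (k,k))
      \<le> (\<Sum>k<K'. (block_coeffs K T th U $$ (m,k))\<^sup>2 * iota)"
    using assms(1) by (intro sum_mono mult_left_mono) auto
  then show ?thesis using assms(2) by (simp add: Bbar_diag_eq sum_distrib_left mult.commute)
qed

lemma rank_pos_of_diag_pos: assumes "\<forall>k<K. 0 < B $$ (k,k)" shows "1 \<le> K'"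
proof (rule ccontr)
  assume "\<not> 1 \<le> K'"
  then have "K' = 0" by simp
  then have "Bbar K T B th $$ (0,0) = 0" using dcsbmD(1)[OF dc] by (simp add: Bbar_diag_eq)
  moreover have "0 < Bbar K T B th $$ (0,0)" using assms dcsbmD(1)[OF dc] by (intro Bbar_diag_pos) auto
  ultimately show False by simp
qed

lemma cosv_block_coeffs_rows:
  assumes edH: "eig_decomp K K' (Bbar K T B th) H D" and "m<K" "l<K"
  shows "cosv (row (block_coeffs K T th U) m) (row (block_coeffs K T th U) l) = cosv (row H m) (row H l)"
proof -
  define C where "C = block_coeffs K T th U"
  have C: "C \<in> carrier_mat K K'" and CC: "C\<^sup>T * C = 1\<^sub>m K'"
    unfolding C_def by (rule block_coeffs_carrier, rule block_coeffs_orthonormal_cols)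
  have H: "H \<in> carrier_mat K K'" "H\<^sup>T * H = 1\<^sub>m K'" "D \<in> carrier_mat K' K'" "diagonal_mat D"
    "\<And>i. i<K' \<Longrightarrow> D $$ (i,i) \<noteq> 0" "Bbar K T B th = H * D * H\<^sup>T"
    using edH unfolding eig_decomp_def by auto
  have Sig: "Sig \<in> carrier_mat K' K'" "diagonal_mat Sig" "\<And>i. i<K' \<Longrightarrow> Sig $$ (i,i) \<noteq> 0"
    using ed unfolding eig_decomp_def by auto
  have "C * C\<^sup>T = H * H\<^sup>T"
    by (rule orthonormal_proj_eq[OF C H(1) CC H(2) Sig(1) H(3) _ _
          diagonal_mat_inverse[OF Sig] diagonal_mat_inverse[OF H(3,4,5)]])
      (auto simp: C_def H(6) Bbar_eq_block_coeffs[symmetric])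
  then have "row C a \<bullet> row C b = row H a \<bullet> row H b" if "a<K" "b<K" for a b
    using that C H(1) by (metis (no_types, lifting) carrier_matD col_transpose index_mult_mat(1)
        index_transpose_mat(2,3))
  then show ?thesis using assms(2,3) unfolding cosv_def vnorm_def C_def[symmetric] by simp
qed

end

section \<open>Recovery\<close>

lemma misclustered_nodes_of_separated_block_rows:
  fixes n K K' :: nat and T B th U Sig At Tt and r \<xi> :: real
  defines "x \<equiv> real K' * (spec_norm (At - Pmat T B th))\<^sup>2 / (gamma_n K' Sig)\<^sup>2"
  assumes dc: "dcsbm n K K' T B th" and ed: "eig_decomp n K' (Pmat T B th) U Sig"
  and rs: "rssc_output n K K' At Tt" and K': "1 \<le> K'" and x_small: "x \<le> 1/8"
  and r: "0 < r"
  and r_le: "\<And>i. i<n \<Longrightarrow>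
      r \<le> (theta_tilde K T th $ i)\<^sup>2 * (\<Sum>k<K'. (block_coeffs K T th U $$ (comm K T i, k))\<^sup>2)"
  and \<xi>: "\<xi> < 1"
  and cos_le: "\<And>m l. m<K \<Longrightarrow> l<K \<Longrightarrow> m \<noteq> l \<Longrightarrow>
      cosv (row (block_coeffs K T th U) m) (row (block_coeffs K T th U) l) \<le> \<xi>"
  and small: "640 * x / (r * (1 - \<xi>)) < min_nk K T"
  obtains S \<sigma> where "S \<subseteq> {..<n}" "real (card S) \<le> 640 * x / (r * (1 - \<xi>))" "\<sigma> permutes {..<K}"
    "\<And>i. i<n \<Longrightarrow> i \<notin> S \<Longrightarrow> \<sigma> (comm K Tt i) = comm K T i"
proof -
  have T: "memb_mat n K T" using dcsbmD(2)[OF dc] .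
  interpret M: dcsbm_eigen n K' "\<lambda>i k. U $$ (i,k)" "\<lambda>k. Sig $$ (k,k)" "\<lambda>i i'. Pmat T B th $$ (i,i')"
    K "comm K T" "\<lambda>i. th $ i" "\<lambda>m l. B $$ (m,l)"
    by (rule dcsbm_eigen_of_model[OF dc ed])
  obtain V lam Xm where ep: "eigen_perturbation n K' (\<lambda>i k. U $$ (i,k)) (\<lambda>k. Sig $$ (k,k))
       (\<lambda>i i'. Pmat T B th $$ (i,i')) (\<lambda>i j. V $$ (i,j)) lam (\<lambda>i i'. At $$ (i,i'))
       (spec_norm (At - Pmat T B th)) (gamma_n K' Sig)"
    and km: "kmeans_sol n K K' (row_normalize (mat n K' (\<lambda>(i,j). V $$ (i,j)))) Tt Xm"
    by (rule rssc_outputE[OF dc ed rs K'])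
  have C_c: "block_coeffs K T th U $$ (m,k) = M.c m k" if "m<K" "k<K'" for m k
    by (rule index_block_coeffs[OF dc ed that])
  have r_le': "r \<le> (M.tt i)\<^sup>2 * (\<Sum>k<K'. (M.c (comm K T i) k)\<^sup>2)" if "i<n" for i
    using r_le[OF that] memb_mat_row(1)[OF T that] by (simp add: tt_eq_theta_tilde[OF dc ed that] C_c)
  interpret E: eigen_perturbation n K' "\<lambda>i k. U $$ (i,k)" "\<lambda>k. Sig $$ (k,k)"
       "\<lambda>i i'. Pmat T B th $$ (i,i')" "\<lambda>i j. V $$ (i,j)" lam "\<lambda>i i'. At $$ (i,i')"
       "spec_norm (At - Pmat T B th)" "gamma_n K' Sig"
    by (rule ep)
  interpret SC: spherical_clustering n K' "\<lambda>i k. U $$ (i,k)" "\<lambda>k. Sig $$ (k,k)"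
       "\<lambda>i i'. Pmat T B th $$ (i,i')" "\<lambda>i j. V $$ (i,j)" lam "\<lambda>i i'. At $$ (i,i')"
       "spec_norm (At - Pmat T B th)" "gamma_n K' Sig" K "comm K T" M.tt M.c r
    by unfold_locales (use M.tt_pos M.block_row_pos_of_le[OF r r_le'] r r_le' in auto)
  have sep: "2 * (1 - \<xi>) \<le> (\<Sum>k<K'. (SC.unit_row m k - SC.unit_row l k)\<^sup>2)"
    if "m<K" "l<K" "m \<noteq> l" for m l
    using cos_le[OF that] SC.unit_row_dist_eq_cosv[OF block_coeffs_carrier[OF dc ed] C_c that(1,2)] by simp
  have t_lt: "\<And>i. i<n \<Longrightarrow> comm K Tt i < K"
    using km memb_mat_row(1) unfolding kmeans_sol_def by blast
  have eq: "1280 * x / (r * (2 * (1 - \<xi>))) = 640 * x / (r * (1 - \<xi>))" using \<xi> r by (simp add: field_simps)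
  have small': "1280 * x / (r * (2 * (1 - \<xi>))) < real (card {i. i<n \<and> comm K T i = m})" if "m<K" for m
    using small min_nk_le[OF that, of T] Gset_eq_comm[OF T that] eq by simp
  have "0 < 2 * (1 - \<xi>)" using \<xi> by simp
  then show ?thesis
    using SC.misclustered_nodes_le[OF E.kmeans_sol_le_normalized_rows[OF T km] t_lt sep _ K' _ x_small small']
      that x_def eq by auto
qed

text \<open>Any \<open>c \<le> 1/1000\<close> serves as \<open>c9\<close> and \<open>c10\<close>: it makes \<open>640 Q < 1\<close>, so that every community keeps
  a correctly clustered node, and \<open>x \<le> 2 Q \<le> 1/8\<close>, as needed for the Davis--Kahan bound.\<close>

lemma recovery_of_separated_block_rows:
  fixes n K K' :: nat and T B th U Sig At Tt and r \<xi> Q c :: real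
  defines "x \<equiv> real K' * (spec_norm (At - Pmat T B th))\<^sup>2 / (gamma_n K' Sig)\<^sup>2"
  assumes dc: "dcsbm n K K' T B th" and ed: "eig_decomp n K' (Pmat T B th) U Sig"
  and rs: "rssc_output n K K' At Tt" and K': "1 \<le> K'" and r: "0 < r"
  and r_le: "\<And>i. i<n \<Longrightarrow>
      r \<le> (theta_tilde K T th $ i)\<^sup>2 * (\<Sum>k<K'. (block_coeffs K T th U $$ (comm K T i, k))\<^sup>2)"
  and \<xi>: "\<xi> < 1"
  and cos_le: "\<And>m l. m<K \<Longrightarrow> l<K \<Longrightarrow> m \<noteq> l \<Longrightarrow>
      cosv (row (block_coeffs K T th U) m) (row (block_coeffs K T th U) l) \<le> \<xi>"
  and Q_eq: "Q = x / (r * (1 - \<xi>) * min_nk K T)" and denom: "r * (1 - \<xi>) * min_nk K T \<le> 2"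
  and c: "0 < c" "c \<le> 1/1000" and Q: "Q \<le> c"
  shows "recovery K T Tt (inverse c * Q)"
proof -
  have mn: "0 < min_nk K T" by (rule min_nk_pos[OF dcsbmD(1,3)[OF dc]])
  have bound: "640 * x / (r * (1 - \<xi>)) = 640 * Q * min_nk K T"
    using mn r \<xi> by (simp add: Q_eq field_simps)
  have Q0: "0 \<le> Q" using r \<xi> mn by (simp add: Q_eq x_def)
  have "x = Q * (r * (1 - \<xi>) * min_nk K T)" using r \<xi> mn by (simp add: Q_eq)
  also have "\<dots> \<le> Q * 2" using denom Q0 by (rule mult_left_mono)
  finally have x_small: "x \<le> 1/8" using Q c by linarith
  have "640 * Q * min_nk K T < 1 * min_nk K T" using Q c mn by (intro mult_strict_right_mono) auto
  then have small: "640 * x / (r * (1 - \<xi>)) < min_nk K T" by (simp add: bound)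
  obtain S \<sigma> where "S \<subseteq> {..<n}" "real (card S) \<le> 640 * x / (r * (1 - \<xi>))" "\<sigma> permutes {..<K}"
    "\<And>i. i<n \<Longrightarrow> i \<notin> S \<Longrightarrow> \<sigma> (comm K Tt i) = comm K T i"
    using misclustered_nodes_of_separated_block_rows[OF dc ed rs K' x_small[unfolded x_def] r r_le \<xi>
        cos_le small[unfolded x_def]] x_def by blast
  then have "recovery K T Tt (640 * x / (r * (1 - \<xi>)) / min_nk K T)"
    using rs unfolding rssc_output_def kmeans_sol_def
    by (intro recovery_of_relabeling[OF dcsbmD(2)[OF dc]] dcsbmD[OF dc]) auto
  moreover have "1000 \<le> inverse c" using c by (simp add: field_simps)
  then have "640 * x / (r * (1 - \<xi>)) / min_nk K T \<le> inverse c * Q"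
    using Q0 mn by (simp add: bound mult_right_mono)
  ultimately show ?thesis by (rule recovery_mono)
qed

lemma rssc_recovery_full_rank:
  fixes n K K' :: nat and T B th U Sig At Tt and c :: real
  defines "Q \<equiv> 1 / min_tt_sq n K T th *
    (real K' * (spec_norm (At - Pmat T B th))\<^sup>2 / ((gamma_n K' Sig)\<^sup>2 * min_nk K T))"
  assumes dc: "dcsbm n K K' T B th" and ed: "eig_decomp n K' (Pmat T B th) U Sig"
  and rs: "rssc_output n K K' At Tt" and KK: "K' = K"
  and c: "0 < c" "c \<le> 1/1000" and Q: "Q \<le> c"
  shows "recovery K T Tt (inverse c * Q)"
proof -
  define C where "C = block_coeffs K T th U"
  define x where "x = real K' * (spec_norm (At - Pmat T B th))\<^sup>2 / (gamma_n K' Sig)\<^sup>2"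
  have C_rows: "(\<Sum>k<K'. C $$ (m,k) * C $$ (l,k)) = (if m = l then 1 else 0)" if "m<K" "l<K" for m l
    using orthonormal_square_rows_sum[of C K m l] block_coeffs_carrier[OF dc ed]
      block_coeffs_orthonormal_cols[OF dc ed] that KK by (simp add: C_def)
  have K': "1 \<le> K'" using KK dcsbmD(1)[OF dc] by simp
  have pos: "0 < gamma_n K' Sig" "0 < min_tt_sq n K T th" "0 < min_nk K T"
    using gamma_n_pos[OF K'] ed min_tt_sq_pos[OF dc ed] min_nk_pos[OF dcsbmD(1,3)[OF dc]]
    by (auto simp: eig_decomp_def)
  have Q_eq: "Q = x / (min_tt_sq n K T th * (1 - 0) * min_nk K T)"
    unfolding Q_def x_def using pos by (simp add: field_simps)
  show ?thesis
  proof (rule recovery_of_separated_block_rows[where r="min_tt_sq n K T th" and \<xi>=0,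
        OF dc ed rs K' pos(2) _ _ _ Q_eq[unfolded x_def] _ c Q])
    show "min_tt_sq n K T th * (1 - 0) * min_nk K T \<le> 2"
      using min_tt_sq_mult_min_nk_le1[OF dc ed] by simp
    show "min_tt_sq n K T th \<le> (theta_tilde K T th $ i)\<^sup>2 *
        (\<Sum>k<K'. (block_coeffs K T th U $$ (comm K T i, k))\<^sup>2)" if "i<n" for i
      using min_tt_sq_le[OF that] C_rows memb_mat_row(1)[OF dcsbmD(2)[OF dc] that]
      by (simp add: C_def power2_eq_square)
    show "cosv (row (block_coeffs K T th U) m) (row (block_coeffs K T th U) l) \<le> 0"
      if "m<K" "l<K" "m \<noteq> l" for m l
      using cosv_row_eq[OF block_coeffs_carrier[OF dc ed] that(1,2)] C_rows that by (simp add: C_def)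
  qed simp
qed

context
  fixes n K K' :: nat and T B U Sig :: "real mat" and th :: "real vec" and iota :: real
  assumes dc: "dcsbm n K K' T B th" and ed: "eig_decomp n K' (Pmat T B th) U Sig"
  and iota: "\<forall>i<K'. Sig $$ (i,i) < iota" and Bpos: "\<forall>k<K. 0 < B $$ (k,k)"
begin

lemma min_Bbar_diag_pos: "0 < Min ((\<lambda>k. Bbar K T B th $$ (k,k)) ` {..<K})"
proof -
  have "Min ((\<lambda>k. Bbar K T B th $$ (k,k)) ` {..<K}) \<in> (\<lambda>k. Bbar K T B th $$ (k,k)) ` {..<K}"
    by (rule Min_in) (use dcsbmD(1)[OF dc] in \<open>auto simp: lessThan_empty_iff\<close>)
  then show ?thesis using Bpos Bbar_diag_pos[OF dc ed] by auto
qed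

lemma min_Bbar_diag_div_le:
  assumes "m<K"
  shows "Min ((\<lambda>k. Bbar K T B th $$ (k,k)) ` {..<K}) / iota \<le> (\<Sum>k<K'. (block_coeffs K T th U $$ (m,k))\<^sup>2)"
    and "0 < iota"
proof -
  have le: "Min ((\<lambda>k. Bbar K T B th $$ (k,k)) ` {..<K})
      \<le> iota * (\<Sum>k<K'. (block_coeffs K T th U $$ (m,k))\<^sup>2)"
    using Bbar_diag_le[OF dc ed iota assms] assms by (intro order_trans[OF Min_le]) auto
  then have "0 < iota * (\<Sum>k<K'. (block_coeffs K T th U $$ (m,k))\<^sup>2)"
    using min_Bbar_diag_pos by linarith
  then show "0 < iota" by (simp add: zero_less_mult_iff sum_nonneg leD)
  then show "Min ((\<lambda>k. Bbar K T B th $$ (k,k)) ` {..<K}) / iota \<le> (\<Sum>k<K'. (block_coeffs K T th U $$ (m,k))\<^sup>2)"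
    using le by (simp add: divide_le_eq mult.commute)
qed

lemma min_Bbar_diag_le_iota: "Min ((\<lambda>k. Bbar K T B th $$ (k,k)) ` {..<K}) \<le> iota"
proof -
  have K: "0 < K" using dcsbmD(1)[OF dc] by simp
  have "Min ((\<lambda>k. Bbar K T B th $$ (k,k)) ` {..<K}) / iota \<le> 1"
    using min_Bbar_diag_div_le(1)[OF K] block_coeffs_row_power2_le1[OF dc ed K] by linarith
  then show ?thesis using min_Bbar_diag_div_le(2)[OF K] by (simp add: divide_le_eq)
qed

end

lemma rssc_recovery_rank_deficient:
  fixes n K K' :: nat and T B th U Sig H D At Tt and xi iota c :: real
  defines "Q \<equiv> iota / (min_tt_sq n K T th * Min ((\<lambda>k. Bbar K T B th $$ (k,k)) ` {..<K})) *
    (real K' * (spec_norm (At - Pmat T B th))\<^sup>2 / ((1 - xi) * (gamma_n K' Sig)\<^sup>2 * min_nk K T))"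
  assumes dc: "dcsbm n K K' T B th" and ed: "eig_decomp n K' (Pmat T B th) U Sig"
  and edH: "eig_decomp K K' (Bbar K T B th) H D"
  and rs: "rssc_output n K K' At Tt" and KK: "K' < K" and xi1: "xi < 1"
  and cosH: "\<forall>k<K. \<forall>l<K. k \<noteq> l \<longrightarrow> cosv (row H k) (row H l) \<le> xi"
  and iota: "\<forall>i<K'. Sig $$ (i,i) < iota" and Bpos: "\<forall>k<K. 0 < B $$ (k,k)"
  and c: "0 < c" "c \<le> 1/1000" and Q: "Q \<le> c"
  shows "recovery K T Tt (inverse c * Q)"
proof -
  define C where "C = block_coeffs K T th U"
  define x where "x = real K' * (spec_norm (At - Pmat T B th))\<^sup>2 / (gamma_n K' Sig)\<^sup>2"
  define mtt where "mtt = min_tt_sq n K T th"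
  define mB where "mB = Min ((\<lambda>k. Bbar K T B th $$ (k,k)) ` {..<K})"
  define r where "r = mtt * mB / iota"
  have K': "1 \<le> K'" by (rule rank_pos_of_diag_pos[OF dc ed Bpos])
  have mtt: "0 < mtt" unfolding mtt_def by (rule min_tt_sq_pos[OF dc ed])
  have mB: "0 < mB" "mB \<le> iota" unfolding mB_def
    by (rule min_Bbar_diag_pos[OF dc ed iota Bpos], rule min_Bbar_diag_le_iota[OF dc ed iota Bpos])
  have cos_le: "cosv (row C m) (row C l) \<le> xi" if "m<K" "l<K" "m \<noteq> l" for m l
    using cosH that cosv_block_coeffs_rows[OF dc ed edH that(1,2)] by (simp add: C_def)
  have xi_ge: "-1 \<le> xi"
    using cos_le[of 0 1] cosv_ge_minus_one[of "row C 0" "row C 1"] KK K' by simp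
  have iota_pos: "0 < iota" using min_Bbar_diag_div_le(2)[OF dc ed iota Bpos, of 0] dcsbmD(1)[OF dc] by simp
  have pos: "0 < gamma_n K' Sig" "0 < min_nk K T" "0 < 1 - xi" "0 < r"
    using gamma_n_pos[OF K'] ed min_nk_pos[OF dcsbmD(1,3)[OF dc]] xi1 mtt mB iota_pos
    by (auto simp: eig_decomp_def r_def)
  have Q_eq: "Q = x / (r * (1 - xi) * min_nk K T)"
    unfolding Q_def x_def r_def mtt_def[symmetric] mB_def[symmetric]
    using pos mtt mB iota_pos by (simp add: field_simps)
  have denom: "r * (1 - xi) * min_nk K T \<le> 2"
  proof -
    have "r \<le> mtt" using mB iota_pos mtt by (simp add: r_def divide_le_eq)
    then have "r * ((1 - xi) * min_nk K T) \<le> mtt * ((1 - xi) * min_nk K T)"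
      using pos by (intro mult_right_mono) auto
    also have "\<dots> = (mtt * min_nk K T) * (1 - xi)" by (simp add: mult_ac)
    also have "\<dots> \<le> 1 * 2"
      using min_tt_sq_mult_min_nk_le1[OF dc ed] xi_ge pos by (intro mult_mono) (auto simp: mtt_def)
    finally show ?thesis by (simp add: mult.assoc)
  qed
  show ?thesis
  proof (rule recovery_of_separated_block_rows[where r=r and \<xi>=xi,
        OF dc ed rs K' pos(4) _ xi1 _ Q_eq[unfolded x_def] denom c Q])
    show "r \<le> (theta_tilde K T th $ i)\<^sup>2 * (\<Sum>k<K'. (block_coeffs K T th U $$ (comm K T i, k))\<^sup>2)"
      if "i<n" for i
      using mult_mono[OF min_tt_sq_le[OF that]
          min_Bbar_diag_div_le(1)[OF dc ed iota Bpos memb_mat_row(1)[OF dcsbmD(2)[OF dc] that]]]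
        mB iota_pos by (simp add: r_def mtt_def mB_def)
    show "cosv (row (block_coeffs K T th U) m) (row (block_coeffs K T th U) l) \<le> xi"
      if "m<K" "l<K" "m \<noteq> l" for m l using cos_le[OF that] by (simp add: C_def)
  qed
qed

theorem theorem7:
  shows "(\<exists>c9>0. \<forall>n K K' T B th U Sig A At Tt.
     dcsbm n K K' T B th \<and> eig_decomp n K' (Pmat T B th) U Sig \<and>
     adj_realization n (Pmat T B th) A \<and> randomized_approx n K' A At \<and>
     rssc_output n K K' At Tt \<and> K' = K \<and>
     1 / min_tt_sq n K T th *
       (real K' * (spec_norm (At - Pmat T B th))\<^sup>2 / ((gamma_n K' Sig)\<^sup>2 * min_nk K T)) \<le> c9
     \<longrightarrow> recovery K T Tt (inverse c9 * (1 / min_tt_sq n K T th *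
       (real K' * (spec_norm (At - Pmat T B th))\<^sup>2 / ((gamma_n K' Sig)\<^sup>2 * min_nk K T)))))
   \<and>
   (\<exists>c10>0. \<forall>n K K' T B th U Sig H D A At Tt xi iota.
     dcsbm n K K' T B th \<and> eig_decomp n K' (Pmat T B th) U Sig \<and>
     eig_decomp K K' (Bbar K T B th) H D \<and>
     adj_realization n (Pmat T B th) A \<and> randomized_approx n K' A At \<and>
     rssc_output n K K' At Tt \<and> K' < K \<and>
     xi < 1 \<and> (\<forall>k<K. \<forall>l<K. k \<noteq> l \<longrightarrow> cosv (row H k) (row H l) \<le> xi) \<and>
     (\<forall>i<K'. Sig $$ (i,i) < iota) \<and> (\<forall>k<K. 0 < B $$ (k,k)) \<and>
     iota / (min_tt_sq n K T th * Min ((\<lambda>k. Bbar K T B th $$ (k,k)) ` {..<K})) *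
       (real K' * (spec_norm (At - Pmat T B th))\<^sup>2 / ((1 - xi) * (gamma_n K' Sig)\<^sup>2 * min_nk K T))
       \<le> c10
     \<longrightarrow> recovery K T Tt (inverse c10 *
       (iota / (min_tt_sq n K T th * Min ((\<lambda>k. Bbar K T B th $$ (k,k)) ` {..<K})) *
       (real K' * (spec_norm (At - Pmat T B th))\<^sup>2 / ((1 - xi) * (gamma_n K' Sig)\<^sup>2 * min_nk K T)))))"
  by (intro conjI exI[of _ "1/1000::real"] allI impI; (simp; fail)?; elim conjE;
      rule rssc_recovery_full_rank rssc_recovery_rank_deficient; simp)

end
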